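(* For all $\mu,\nu\in\mathcal{S}\mathrm{Curr}(F_N)$, the set function $U\mapsto(\mu\times\nu)(I^{-1}(U))$ on Borel subsets $U\subset\mathcal{C}_N$ is well defined and is a subset current; moreover for every $T\in\mathrm{Sub}(X,1)$ it satisfies $(\mu\times\nu)(I^{-1}(\mathrm{SCyl}(T)))\leq V(\mu)V(\nu)$, where $V(\mu)=\sum_{T'\in\mathcal{R}_1}\mu(\mathrm{SCyl}(T'))$. The resulting map $\widehat I\colon\mathcal{S}\mathrm{Curr}(F_N)^2\to\mathcal{S}\mathrm{Curr}(F_N)$ is $\mathbb{R}_{\geq0}$-bilinear.
   Context: $N\geq2$, $F_N$ free with free basis $A$, $X$ its Cayley graph (tree with vertex set $F_N$, edge lengths 1, path metric $d_X$), $\partial X$ its boundary. $\mathcal{C}_N$: closed subsets of $\partial X$ with at least two points, Vietoris (Hausdorff) topology; a subset current is an $F_N$-invariant Borel measure on $\mathcal{C}_N$ finite on compact sets. $I(S_1,S_2)=S_1\cap S_2\in\{\text{closed subsets of }\partial X\}$. For an oriented edge $e$ of $X$, $\mathrm{Cyl}(e)\subset\partial X$ is the set of ends of geodesic rays starting with $e$. $\mathrm{Sub}(X)$ is the set of finite subtrees of $X$ with at least two vertices; for $T\in\mathrm{Sub}(X)$ with terminal edges $e_1,\dots,e_m$ (oriented edges whose terminal vertex has degree one in $T$), $\mathrm{SCyl}(T)=\{S\in\mathcal{C}_N: S\subset\bigcup_i\mathrm{Cyl}(e_i),\ S\cap\mathrm{Cyl}(e_i)\neq\emptyset\ \forall i\}$.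 $\mathrm{Sub}(X,1)$ is the set of $T\in\mathrm{Sub}(X)$ containing $1$. $\mathcal{R}_1$ is the set of $T\in\mathrm{Sub}(X)$ containing $1$ such that $1$ has degree $\ge2$ in $T$ and every degree-one vertex $u$ of $T$ satisfies $d_X(1,u)=1$. *)

theory Defs
  imports "HOL-Analysis.Analysis" "HOL-Probability.Probability"
begin

text \<open>Letters of the free basis A = {1..N} and their inverses are encoded as
nonzero integers a with |a| \<le> N; the inverse of a is -a.  Elements of F_N are
freely reduced words (lists of letters); 1 is the empty word.\<close>

definition letters :: "nat \<Rightarrow> int set" where
  "letters N = {a. a \<noteq> 0 \<and> \<bar>a\<bar> \<le> int N}"

definition reduced :: "int list \<Rightarrow> bool" where
  "reduced xs \<longleftrightarrow> (\<forall>i. Suc i < length xs \<longrightarrow> xs ! Suc i \<noteq> - (xs ! i))"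

definition FN :: "nat \<Rightarrow> int list set" where
  "FN N = {xs. set xs \<subseteq> letters N \<and> reduced xs}"

definition cons_red :: "int \<Rightarrow> int list \<Rightarrow> int list" where
  "cons_red a xs = (case xs of [] \<Rightarrow> [a] | b # ys \<Rightarrow> (if b = - a then ys else a # xs))"

definition mult :: "int list \<Rightarrow> int list \<Rightarrow> int list" where
  "mult g h = foldr cons_red g h"

definition inv_w :: "int list \<Rightarrow> int list" where
  "inv_w g = rev (map uminus g)"

definition adj :: "nat \<Rightarrow> int list \<Rightarrow> int list \<Rightarrow> bool" where
  "adj N u v \<longleftrightarrow> u \<in> FN N \<and> (\<exists>a\<in>letters N. v = mult u [a])"

definition dX :: "int list \<Rightarrow> int list \<Rightarrow> nat" where
  "dX u v = length (mult (inv_w u) v)"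

text \<open>Ends of X are identified with ends of geodesic rays from 1, i.e. infinite
reduced words, with the (product = cylinder) topology.\<close>
definition bdry :: "nat \<Rightarrow> (nat \<Rightarrow> int) set" where
  "bdry N = {x. \<forall>n. x n \<in> letters N \<and> x (Suc n) \<noteq> - x n}"

definition cons_red_inf :: "int \<Rightarrow> (nat \<Rightarrow> int) \<Rightarrow> (nat \<Rightarrow> int)" where
  "cons_red_inf a x = (if x 0 = - a then (\<lambda>n. x (Suc n))
                       else (\<lambda>n. if n = 0 then a else x (n - 1)))"

definition act_bdry :: "int list \<Rightarrow> (nat \<Rightarrow> int) \<Rightarrow> (nat \<Rightarrow> int)" where
  "act_bdry g x = foldr cons_red_inf g x"

definition bdry_top :: "nat \<Rightarrow> (nat \<Rightarrow> int) topology" where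
  "bdry_top N = top_of_set (bdry N)"

text \<open>Cyl(e) for the oriented edge e = (u,v): ends of geodesic rays starting
with e, i.e. boundary points whose ray from u passes first through v.\<close>
definition Cyl :: "nat \<Rightarrow> int list \<times> int list \<Rightarrow> (nat \<Rightarrow> int) set" where
  "Cyl N e = {\<xi> \<in> bdry N. [act_bdry (inv_w (fst e)) \<xi> 0] = mult (inv_w (fst e)) (snd e)}"

definition CN :: "nat \<Rightarrow> (nat \<Rightarrow> int) set set" where
  "CN N = {S. S \<subseteq> bdry N \<and> closedin (bdry_top N) S \<and> (\<exists>x\<in>S. \<exists>y\<in>S. x \<noteq> y)}"

definition Vietoris :: "nat \<Rightarrow> (nat \<Rightarrow> int) set topology" where
  "Vietoris N = topology_generated_by
     ({{S \<in> CN N. S \<subseteq> U} | U. openin (bdry_top N) U}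
      \<union> {{S \<in> CN N. S \<inter> U \<noteq> {}} | U. openin (bdry_top N) U})"

definition borel_CN :: "nat \<Rightarrow> (nat \<Rightarrow> int) set measure" where
  "borel_CN N = sigma (CN N) {U. openin (Vietoris N) U}"

definition act_set :: "int list \<Rightarrow> (nat \<Rightarrow> int) set set \<Rightarrow> (nat \<Rightarrow> int) set set" where
  "act_set g U = (\<lambda>S. act_bdry g ` S) ` U"

definition is_SCurr :: "nat \<Rightarrow> (nat \<Rightarrow> int) set measure \<Rightarrow> bool" where
  "is_SCurr N \<mu> \<longleftrightarrow> sets \<mu> = sets (borel_CN N)
     \<and> (\<forall>g\<in>FN N. \<forall>U\<in>sets (borel_CN N). emeasure \<mu> (act_set g U) = emeasure \<mu> U)
     \<and> (\<forall>K. compactin (Vietoris N) K \<longrightarrow> emeasure \<mu> K < \<infinity>)"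

definition edges_in :: "nat \<Rightarrow> int list set \<Rightarrow> (int list \<times> int list) set" where
  "edges_in N T = {(u, v). u \<in> T \<and> v \<in> T \<and> adj N u v}"

text \<open>A finite subtree with at least two vertices, given by its vertex set
(a connected set of vertices of the tree X spans a unique subtree).\<close>
definition Sub :: "nat \<Rightarrow> int list set set" where
  "Sub N = {T. finite T \<and> T \<subseteq> FN N \<and> 2 \<le> card T
              \<and> (\<forall>u\<in>T. \<forall>v\<in>T. (u, v) \<in> (edges_in N T)\<^sup>*)}"

definition deg :: "nat \<Rightarrow> int list set \<Rightarrow> int list \<Rightarrow> nat" where
  "deg N T v = card {u \<in> T. adj N v u}"

definition terminal_edges :: "nat \<Rightarrow> int list set \<Rightarrow> (int list \<times> int list) set" where
  "terminal_edges N T = {(u, v) \<in> edges_in N T. deg N T v = 1}"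

definition SCyl :: "nat \<Rightarrow> int list set \<Rightarrow> (nat \<Rightarrow> int) set set" where
  "SCyl N T = {S \<in> CN N. S \<subseteq> (\<Union>e\<in>terminal_edges N T. Cyl N e)
                 \<and> (\<forall>e\<in>terminal_edges N T. S \<inter> Cyl N e \<noteq> {})}"

definition Sub1 :: "nat \<Rightarrow> int list set set" where
  "Sub1 N = {T \<in> Sub N. [] \<in> T}"

definition R1 :: "nat \<Rightarrow> int list set set" where
  "R1 N = {T \<in> Sub N. [] \<in> T \<and> 2 \<le> deg N T []
             \<and> (\<forall>u\<in>T. deg N T u = 1 \<longrightarrow> dX [] u = 1)}"

definition V :: "nat \<Rightarrow> (nat \<Rightarrow> int) set measure \<Rightarrow> ennreal" where
  "V N \<mu> = (\<Sum>T\<in>R1 N. emeasure \<mu> (SCyl N T))"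

definition Ipre :: "nat \<Rightarrow> (nat \<Rightarrow> int) set set \<Rightarrow> ((nat \<Rightarrow> int) set \<times> (nat \<Rightarrow> int) set) set" where
  "Ipre N U = {p \<in> CN N \<times> CN N. fst p \<inter> snd p \<in> U}"

definition Ihat :: "nat \<Rightarrow> (nat \<Rightarrow> int) set measure \<Rightarrow> (nat \<Rightarrow> int) set measure
                     \<Rightarrow> (nat \<Rightarrow> int) set measure" where
  "Ihat N \<mu> \<nu> = measure_of (CN N) (sets (borel_CN N)) (\<lambda>U. emeasure (\<mu> \<Otimes>\<^sub>M \<nu>) (Ipre N U))"

end

theory Submission
  imports Defs
begin

text \<open>
  Given subset currents \<open>\<mu>\<close>, \<open>\<nu>\<close>, the set function \<open>U \<mapsto> (\<mu> \<times> \<nu>)(I\<^sup>-\<^sup>1 U)\<close>, where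
  \<open>I(S\<^sub>1, S\<^sub>2) = S\<^sub>1 \<inter> S\<^sub>2\<close>, is the push-forward of the product measure; the whole
  proof consists in checking that this push-forward makes sense and is again a subset
  current.

  \<^item> Reduced words act on the boundary \<open>\<partial>X\<close> (infinite reduced words) by homeomorphisms;
    \<open>\<partial>X\<close> is a compact subspace of the product space \<open>nat \<Rightarrow> int\<close>, whose topology is
    generated by the prefix cylinders \<open>pcyl x m\<close>.
  \<^item> The Borel \<open>\<sigma>\<close>-algebra of the Vietoris topology on \<open>C\<^sub>N\<close> is generated by the
    countably many sets "\<open>S\<close> lies inside / meets a finite union of word cylinders".
  \<^item> For clopen \<open>C\<close>, the pairs whose intersection meets \<open>C\<close> form a countable
    intersection of Borel rectangles (by compactness); so does the set of pairs whose
    intersection lies in \<open>C\<^sub>N\<close>.  Induction over the generated \<open>\<sigma>\<close>-algebra then gives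
    measurability of \<open>I\<^sup>-\<^sup>1 U\<close>.
  \<^item> The sets \<open>Wide N n\<close> (elements of \<open>C\<^sub>N\<close> with two points differing among the first
    \<open>n\<close> letters) are open and compact and exhaust \<open>C\<^sub>N\<close>, and every compact set lies in
    one of them.  Hence subset currents are \<open>\<sigma>\<close>-finite, the push-forward is locally
    finite because \<open>I\<^sup>-\<^sup>1 (Wide N n) \<subseteq> Wide N n \<times> Wide N n\<close>, and it is invariant
    because the diagonal action preserves the product measure.
  \<^item> Every \<open>SCyl T\<close> with \<open>1 \<in> T\<close> lies in \<open>Wide N 1\<close>, which is covered by the finitely
    many \<open>SCyl T'\<close>, \<open>T' \<in> R\<^sub>1\<close> (star trees); this yields the bound \<open>V(\<mu>) V(\<nu>)\<close>.
  \<^item> Bilinearity is Tonelli's theorem.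
\<close>

section \<open>The action of words on the boundary\<close>

lemma letters_uminus [simp]: "- a \<in> letters N \<longleftrightarrow> a \<in> letters N"
  by (auto simp: letters_def)

lemma finite_letters: "finite (letters N)"
proof -
  have "letters N \<subseteq> {- int N..int N}" by (auto simp: letters_def)
  then show ?thesis by (rule finite_subset) simp
qed

lemma bdryD: "x \<in> bdry N \<Longrightarrow> x n \<in> letters N" "x \<in> bdry N \<Longrightarrow> x (Suc n) \<noteq> - x n"
  by (auto simp: bdry_def)

lemma cons_red_inf_bdry:
  assumes a: "a \<in> letters N" and x: "x \<in> bdry N"
  shows "cons_red_inf a x \<in> bdry N"
proof (cases "x 0 = - a")
  case True
  then show ?thesis using x unfolding cons_red_inf_def bdry_def by simp
next
  case False
  have "(\<lambda>n. if n = 0 then a else x (n - 1)) \<in> bdry N"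
    unfolding bdry_def
  proof (intro CollectI allI conjI)
    fix n
    show "(if n = 0 then a else x (n - 1)) \<in> letters N" using a bdryD(1)[OF x] by simp
    show "(if Suc n = 0 then a else x (Suc n - 1)) \<noteq> - (if n = 0 then a else x (n - 1))"
    proof (cases n)
      case 0 then show ?thesis using False by auto
    next
      case (Suc k) then show ?thesis using bdryD(2)[OF x, of k] by simp
    qed
  qed
  then show ?thesis using False unfolding cons_red_inf_def by simp
qed

lemma cons_red_inf_cancel:
  assumes x: "x \<in> bdry N"
  shows "cons_red_inf (- a) (cons_red_inf a x) = x"
proof (cases "x 0 = - a")
  case True
  have "x (Suc 0) \<noteq> a" using bdryD(2)[OF x, of 0] True by auto
  show ?thesis
  proof (rule ext)
    fix n show "cons_red_inf (- a) (cons_red_inf a x) n = x n"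
      using True \<open>x (Suc 0) \<noteq> a\<close> unfolding cons_red_inf_def by (cases n) auto
  qed
next
  case False
  then show ?thesis unfolding cons_red_inf_def by (auto intro!: ext)
qed

lemma act_bdry_Nil [simp]: "act_bdry [] x = x"
  by (simp add: act_bdry_def)

lemma act_bdry_Cons [simp]: "act_bdry (a # g) x = cons_red_inf a (act_bdry g x)"
  by (simp add: act_bdry_def)

lemma act_bdry_append: "act_bdry (p @ q) x = act_bdry p (act_bdry q x)"
  by (simp add: act_bdry_def)

lemma act_bdry_in: "set g \<subseteq> letters N \<Longrightarrow> x \<in> bdry N \<Longrightarrow> act_bdry g x \<in> bdry N"
  by (induction g) (auto intro: cons_red_inf_bdry)

lemma inv_w_Nil [simp]: "inv_w [] = []"
  by (simp add: inv_w_def)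

lemma inv_w_Cons: "inv_w (a # g) = inv_w g @ [- a]"
  by (simp add: inv_w_def)

lemma inv_w_snoc: "inv_w (u @ [c]) = [- c] @ inv_w u"
  by (simp add: inv_w_def)

lemma inv_w_inv_w [simp]: "inv_w (inv_w g) = g"
  by (simp add: inv_w_def rev_map)

lemma set_inv_w: "set g \<subseteq> letters N \<Longrightarrow> set (inv_w g) \<subseteq> letters N"
  by (auto simp: inv_w_def)

lemma act_bdry_inv_left:
  "set g \<subseteq> letters N \<Longrightarrow> x \<in> bdry N \<Longrightarrow> act_bdry (inv_w g) (act_bdry g x) = x"
proof (induction g)
  case (Cons a g)
  have "act_bdry g x \<in> bdry N" using Cons by (intro act_bdry_in) auto
  then show ?case using Cons by (simp add: inv_w_Cons act_bdry_append cons_red_inf_cancel)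
qed simp

lemma act_bdry_inv_right:
  "set g \<subseteq> letters N \<Longrightarrow> x \<in> bdry N \<Longrightarrow> act_bdry g (act_bdry (inv_w g) x) = x"
  using act_bdry_inv_left[of "inv_w g" N x] set_inv_w[of g N] by simp

lemma act_image_eq:
  assumes g: "set g \<subseteq> letters N" and S: "S \<subseteq> bdry N"
  shows "act_bdry g ` S = {x \<in> bdry N. act_bdry (inv_w g) x \<in> S}"
proof
  show "act_bdry g ` S \<subseteq> {x \<in> bdry N. act_bdry (inv_w g) x \<in> S}"
    using g S by (auto intro: act_bdry_in simp: act_bdry_inv_left)
  show "{x \<in> bdry N. act_bdry (inv_w g) x \<in> S} \<subseteq> act_bdry g ` S"
  proof
    fix x assume "x \<in> {x \<in> bdry N. act_bdry (inv_w g) x \<in> S}"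
    then show "x \<in> act_bdry g ` S"
      using act_bdry_inv_right[OF g] by (metis (mono_tags, lifting) image_eqI mem_Collect_eq)
  qed
qed

section \<open>Topology of the boundary\<close>

text \<open>The boundary carries the subspace topology of the product \<open>nat \<Rightarrow> int\<close> (with
  discrete factors); a neighbourhood basis of \<open>x\<close> is given by the prefix cylinders
  \<open>pcyl x m\<close> of points agreeing with \<open>x\<close> on the first \<open>m\<close> letters.\<close>

definition pcyl :: "(nat \<Rightarrow> int) \<Rightarrow> nat \<Rightarrow> (nat \<Rightarrow> int) set" where
  "pcyl x m = {y. \<forall>i<m. y i = x i}"

lemma open_pcyl: "open (pcyl x m)"
proof -
  have "open {f::nat\<Rightarrow>int. \<forall>i\<in>{..<m}. f (id i) \<in> {x i}}"
    by (rule product_topology_basis') (auto intro: discrete_topology_class.open_discrete)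
  moreover have "{f::nat\<Rightarrow>int. \<forall>i\<in>{..<m}. f (id i) \<in> {x i}} = pcyl x m"
    by (auto simp: pcyl_def)
  ultimately show ?thesis by simp
qed

lemma closed_coord: "closed {y::nat\<Rightarrow>int. y i \<in> A}"
proof -
  have "closed A"
    unfolding closed_def by (rule discrete_topology_class.open_discrete)
  then have "closed ((\<lambda>y::nat\<Rightarrow>int. y i) -` A)"
    by (rule closed_vimage) simp
  then show ?thesis by (simp add: vimage_def)
qed

lemma closed_pcyl: "closed (pcyl x m)"
proof -
  have "pcyl x m = (\<Inter>i\<in>{..<m}. {y. y i \<in> {x i}})" by (auto simp: pcyl_def)
  then show ?thesis by (auto intro!: closed_INT closed_coord[of _ "{_}", simplified])
qed

lemma pcyl_self [simp]: "x \<in> pcyl x m"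
  by (simp add: pcyl_def)

lemma pcyl_antimono: "m \<le> n \<Longrightarrow> pcyl x n \<subseteq> pcyl x m"
  by (auto simp: pcyl_def)

lemma pcyl_sym: "y \<in> pcyl x m \<longleftrightarrow> x \<in> pcyl y m"
  by (auto simp: pcyl_def)

lemma open_contains_pcyl:
  assumes "open U" "x \<in> U" shows "\<exists>m. pcyl x m \<subseteq> U"
proof -
  have "openin (product_topology (\<lambda>i. euclidean) UNIV) U"
    using assms(1) by (simp add: open_fun_def)
  from product_topology_open_contains_basis[OF this assms(2)]
  obtain X where X: "x \<in> (\<Pi>\<^sub>E i\<in>UNIV. X i)" "finite {i. X i \<noteq> topspace euclidean}"
     "(\<Pi>\<^sub>E i\<in>UNIV. X i) \<subseteq> U" by blast
  from X(2) obtain m where m: "{i. X i \<noteq> UNIV} \<subseteq> {..<m}"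
    using finite_nat_bounded by auto
  have "pcyl x m \<subseteq> (\<Pi>\<^sub>E i\<in>UNIV. X i)"
  proof
    fix y assume y: "y \<in> pcyl x m"
    have "y i \<in> X i" for i
    proof (cases "X i = UNIV")
      case False
      then have "y i = x i" using m y by (auto simp: pcyl_def)
      then show ?thesis using X(1) by auto
    qed simp
    then show "y \<in> (\<Pi>\<^sub>E i\<in>UNIV. X i)" by auto
  qed
  then show ?thesis using X(3) by blast
qed

lemma closed_pcyl_limit: "closed S \<Longrightarrow> (\<And>m. pcyl x m \<inter> S \<noteq> {}) \<Longrightarrow> x \<in> S"
  using open_contains_pcyl[of "- S" x] by blast

lemma closed_bdry: "closed (bdry N)"
proof -
  have "bdry N = (\<Inter>n. {y. y n \<in> letters N})
                 \<inter> (\<Inter>n. \<Inter>a. {y. y n \<in> - {a}} \<union> {y. y (Suc n) \<in> - {- a}})"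
    by (auto simp: bdry_def)
  then show ?thesis
    by (auto intro!: closed_Int closed_INT closed_Un closed_coord closed_coord[of _ "- {_}", simplified])
qed

lemma compact_bdry: "compact (bdry N)"
proof -
  have "compactin (product_topology (\<lambda>i. euclidean) UNIV) (PiE UNIV (\<lambda>i. letters N))"
    by (subst compactin_PiE) (auto intro: finite_imp_compact finite_letters)
  then have "compact (PiE UNIV (\<lambda>i::nat. letters N))"
    by (simp add: euclidean_product_topology)
  moreover have "bdry N = PiE UNIV (\<lambda>i::nat. letters N) \<inter> bdry N"
    by (auto simp: bdry_def)
  ultimately show ?thesis using closed_bdry by (metis compact_Int_closed)
qed

lemma openin_bdry_iff:
  "openin (bdry_top N) U \<longleftrightarrow> U \<subseteq> bdry N \<and> (\<forall>x\<in>U. \<exists>m. pcyl x m \<inter> bdry N \<subseteq> U)"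
proof
  assume "openin (bdry_top N) U"
  then obtain W where O: "open W" "U = W \<inter> bdry N"
    by (auto simp: bdry_top_def openin_open)
  then show "U \<subseteq> bdry N \<and> (\<forall>x\<in>U. \<exists>m. pcyl x m \<inter> bdry N \<subseteq> U)"
    using open_contains_pcyl[OF O(1)] by blast
next
  assume H: "U \<subseteq> bdry N \<and> (\<forall>x\<in>U. \<exists>m. pcyl x m \<inter> bdry N \<subseteq> U)"
  then obtain m where m: "\<And>x. x \<in> U \<Longrightarrow> pcyl x (m x) \<inter> bdry N \<subseteq> U" by metis
  have "U = (\<Union>x\<in>U. pcyl x (m x)) \<inter> bdry N"
    using m H by auto
  moreover have "open (\<Union>x\<in>U. pcyl x (m x))" by (auto intro: open_pcyl)
  ultimately show "openin (bdry_top N) U"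
    by (auto simp: bdry_top_def openin_open)
qed

lemma openin_bdry_open: "open W \<Longrightarrow> openin (bdry_top N) (W \<inter> bdry N)"
  unfolding bdry_top_def openin_open by blast

lemma closedin_bdry_iff: "closedin (bdry_top N) S \<longleftrightarrow> closed S \<and> S \<subseteq> bdry N"
  unfolding bdry_top_def using closed_bdry closedin_closed_eq by blast

lemma CN_closed: "S \<in> CN N \<Longrightarrow> closed S" "S \<in> CN N \<Longrightarrow> S \<subseteq> bdry N"
  by (auto simp: CN_def closedin_bdry_iff)

lemma compact_closed_in_bdry: "closed K \<Longrightarrow> K \<subseteq> bdry N \<Longrightarrow> compact K"
  using compact_Int_closed[OF compact_bdry, of K N] by (simp add: Int_absorb1)

lemma CN_compact: "S \<in> CN N \<Longrightarrow> compact S"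
  by (rule compact_closed_in_bdry[OF CN_closed])

text \<open>The action of a word \<open>g\<close> is continuous: the first \<open>m\<close> letters of \<open>g x\<close> only depend
  on the first \<open>m + |g|\<close> letters of \<open>x\<close>.\<close>

lemma act_bdry_pcyl: "y \<in> pcyl x (m + length g) \<Longrightarrow> act_bdry g y \<in> pcyl (act_bdry g x) m"
proof (induction g arbitrary: m)
  case (Cons a g)
  then have "act_bdry g y \<in> pcyl (act_bdry g x) (Suc m)" by simp
  then show ?case by (auto simp: pcyl_def cons_red_inf_def)
qed simp

lemma act_cont:
  assumes g: "set g \<subseteq> letters N" and Vo: "openin (bdry_top N) Vo"
  shows "openin (bdry_top N) {x \<in> bdry N. act_bdry g x \<in> Vo}"
proof -
  have "\<exists>m. pcyl x m \<inter> bdry N \<subseteq> {x \<in> bdry N. act_bdry g x \<in> Vo}"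
    if x: "x \<in> bdry N" "act_bdry g x \<in> Vo" for x
  proof -
    obtain m where m: "pcyl (act_bdry g x) m \<inter> bdry N \<subseteq> Vo"
      using Vo x(2) by (auto simp: openin_bdry_iff)
    then have "pcyl x (m + length g) \<inter> bdry N \<subseteq> {x \<in> bdry N. act_bdry g x \<in> Vo}"
      using g act_bdry_pcyl act_bdry_in by blast
    then show ?thesis by blast
  qed
  then show ?thesis by (subst openin_bdry_iff) auto
qed

definition starts_with :: "int list \<Rightarrow> (nat \<Rightarrow> int) \<Rightarrow> bool" where
  "starts_with u x \<longleftrightarrow> (\<forall>i<length u. x i = u ! i)"

lemma starts_with_map: "starts_with (map x [0..<m]) y \<longleftrightarrow> y \<in> pcyl x m"
  by (auto simp: starts_with_def pcyl_def)

lemma starts_with_pcyl: "{y. starts_with w y} = pcyl (\<lambda>i. w ! i) (length w)"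
  by (auto simp: starts_with_def pcyl_def)

lemma open_starts_with: "open {y. starts_with w y}"
  by (simp add: starts_with_pcyl open_pcyl)

lemma closed_starts_with: "closed {y. starts_with w y}"
  by (simp add: starts_with_pcyl closed_pcyl)

lemma starts_with_unique:
  "starts_with v1 x \<Longrightarrow> starts_with v2 x \<Longrightarrow> length v1 = length v2 \<Longrightarrow> v1 = v2"
  by (auto simp: starts_with_def intro: nth_equalityI)


section \<open>The Vietoris topology and its Borel sets\<close>

definition Within :: "nat \<Rightarrow> (nat \<Rightarrow> int) set \<Rightarrow> (nat \<Rightarrow> int) set set" where
  "Within N U = {S \<in> CN N. S \<subseteq> U}"

definition Hit :: "nat \<Rightarrow> (nat \<Rightarrow> int) set \<Rightarrow> (nat \<Rightarrow> int) set set" where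
  "Hit N U = {S \<in> CN N. S \<inter> U \<noteq> {}}"

definition vsubbase :: "nat \<Rightarrow> (nat \<Rightarrow> int) set set set" where
  "vsubbase N = {Within N U | U. openin (bdry_top N) U} \<union> {Hit N U | U. openin (bdry_top N) U}"

lemma Vietoris_vsubbase: "Vietoris N = topology_generated_by (vsubbase N)"
  unfolding Vietoris_def vsubbase_def Within_def Hit_def by simp

lemma CN_in_vsubbase: "CN N \<in> vsubbase N"
proof -
  have "Within N (bdry N) = CN N" by (auto simp: Within_def CN_def)
  moreover have "openin (bdry_top N) (bdry N)" by (simp add: bdry_top_def)
  ultimately show ?thesis unfolding vsubbase_def by blast
qed

lemma Union_vsubbase: "\<Union>(vsubbase N) = CN N"
  using CN_in_vsubbase[of N] by (auto simp: vsubbase_def Within_def Hit_def)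

lemma topspace_Vietoris [simp]: "topspace (Vietoris N) = CN N"
  by (simp add: Vietoris_vsubbase Union_vsubbase)

lemma openin_Vietoris_sub: "openin (Vietoris N) A \<Longrightarrow> A \<subseteq> CN N"
  using openin_subset by fastforce

lemma Within_open: "openin (bdry_top N) U \<Longrightarrow> openin (Vietoris N) (Within N U)"
  unfolding Vietoris_vsubbase by (rule topology_generated_by_Basis) (auto simp: vsubbase_def)

lemma Hit_open: "openin (bdry_top N) U \<Longrightarrow> openin (Vietoris N) (Hit N U)"
  unfolding Vietoris_vsubbase by (rule topology_generated_by_Basis) (auto simp: vsubbase_def)

text \<open>A countable family of basic open sets: \<open>Within\<close> and \<open>Hit\<close> of finite unions of word
  cylinders, and their finite intersections \<open>vinter\<close>.\<close>

definition word_cyls :: "nat \<Rightarrow> int list list \<Rightarrow> (nat \<Rightarrow> int) set" where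
  "word_cyls N ws = (\<Union>w\<in>set ws. {y. starts_with w y}) \<inter> bdry N"

lemma openin_word_cyls: "openin (bdry_top N) (word_cyls N ws)"
  unfolding word_cyls_def by (intro openin_bdry_open open_UN) (auto intro: open_starts_with)

fun vbasic :: "nat \<Rightarrow> bool \<times> int list list \<Rightarrow> (nat \<Rightarrow> int) set set" where
  "vbasic N (True, ws) = Within N (word_cyls N ws)"
| "vbasic N (False, ws) = Hit N (word_cyls N ws)"

lemma vbasic_open: "openin (Vietoris N) (vbasic N p)"
  by (cases p; cases "fst p") (auto intro: Within_open Hit_open openin_word_cyls)

lemma vbasic_sub: "vbasic N p \<subseteq> CN N"
  using vbasic_open openin_Vietoris_sub by blast

definition vinter :: "nat \<Rightarrow> (bool \<times> int list list) list \<Rightarrow> (nat \<Rightarrow> int) set set" where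
  "vinter N l = CN N \<inter> \<Inter>(vbasic N ` set l)"

lemma vinter_append: "vinter N (l1 @ l2) = vinter N l1 \<inter> vinter N l2"
  by (auto simp: vinter_def)

text \<open>For
  \<open>Within\<close> this uses compactness of the element \<open>S\<close>: finitely many cylinders inside
  \<open>U\<close> cover \<open>S\<close>.\<close>

lemma refine_Within:
  assumes U: "openin (bdry_top N) U" and S: "S \<in> Within N U"
  shows "\<exists>l. S \<in> vinter N l \<and> vinter N l \<subseteq> Within N U"
proof -
  have SC: "S \<in> CN N" "S \<subseteq> U" using S by (auto simp: Within_def)
  have "\<forall>x\<in>S. \<exists>m. pcyl x m \<inter> bdry N \<subseteq> U" using U SC(2) by (auto simp: openin_bdry_iff)
  then obtain m where m: "\<And>x. x \<in> S \<Longrightarrow> pcyl x (m x) \<inter> bdry N \<subseteq> U" by metis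
  obtain C' where C': "C' \<subseteq> S" "finite C'" "S \<subseteq> (\<Union>x\<in>C'. pcyl x (m x))"
    by (rule compactE_image[OF CN_compact[OF SC(1)], of S "\<lambda>x. pcyl x (m x)"])
       (auto intro: open_pcyl)
  obtain xs where xs: "set xs = C'" using C'(2) finite_list by blast
  define ws where "ws = map (\<lambda>x. map x [0..<m x]) xs"
  have ws: "word_cyls N ws = (\<Union>x\<in>C'. pcyl x (m x)) \<inter> bdry N"
    unfolding word_cyls_def ws_def using xs by (auto simp: starts_with_map)
  have "S \<in> vinter N [(True, ws)]"
    using SC(1) C'(3) CN_closed(2)[OF SC(1)] by (auto simp: vinter_def Within_def ws)
  moreover have "vinter N [(True, ws)] \<subseteq> Within N U"
    using m C'(1) by (fastforce simp: vinter_def Within_def ws)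
  ultimately show ?thesis by blast
qed

lemma refine_Hit:
  assumes U: "openin (bdry_top N) U" and S: "S \<in> Hit N U"
  shows "\<exists>l. S \<in> vinter N l \<and> vinter N l \<subseteq> Hit N U"
proof -
  obtain x where x: "x \<in> S" "x \<in> U" and SC: "S \<in> CN N" using S by (auto simp: Hit_def)
  obtain m where m: "pcyl x m \<inter> bdry N \<subseteq> U" using U x by (auto simp: openin_bdry_iff)
  define ws where "ws = [map x [0..<m]]"
  have ws: "word_cyls N ws = pcyl x m \<inter> bdry N"
    unfolding word_cyls_def ws_def by (auto simp: starts_with_map)
  have "S \<in> vinter N [(False, ws)]"
    using SC x CN_closed(2)[OF SC] by (auto simp: vinter_def Hit_def ws)
  moreover have "vinter N [(False, ws)] \<subseteq> Hit N U"
    using m by (auto simp: vinter_def Hit_def ws)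
  ultimately show ?thesis by blast
qed

lemma refine_open:
  assumes "openin (Vietoris N) A" "S \<in> A"
  shows "\<exists>l. S \<in> vinter N l \<and> vinter N l \<subseteq> A"
proof -
  have "generate_topology_on (vsubbase N) A"
    using assms(1) by (simp add: Vietoris_vsubbase openin_topology_generated_by_iff)
  then show ?thesis using assms(2)
  proof (induction arbitrary: S)
    case (Int a b)
    then obtain l1 l2 where "S \<in> vinter N l1" "vinter N l1 \<subseteq> a" "S \<in> vinter N l2" "vinter N l2 \<subseteq> b"
      by (meson IntD1 IntD2)
    then show ?case by (intro exI[of _ "l1 @ l2"]) (auto simp: vinter_append)
  next
    case (UN K)
    then show ?case by blast
  next
    case (Basis s)
    then show ?case unfolding vsubbase_def using refine_Within refine_Hit by blast
  qed simp
qed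

lemma sets_borel_CN_opens: "sets (borel_CN N) = sigma_sets (CN N) {U. openin (Vietoris N) U}"
  unfolding borel_CN_def using openin_Vietoris_sub by (intro sets_measure_of) blast

lemma space_borel_CN [simp]: "space (borel_CN N) = CN N"
  unfolding borel_CN_def using openin_Vietoris_sub by (intro space_measure_of) blast

lemma sets_borel_sub: "sets (borel_CN N) \<subseteq> Pow (CN N)"
  using sets.space_closed[of "borel_CN N"] by simp

lemma open_in_borel: "openin (Vietoris N) A \<Longrightarrow> A \<in> sets (borel_CN N)"
  by (simp add: sets_borel_CN_opens)

lemma Hit_borel: "openin (bdry_top N) U \<Longrightarrow> Hit N U \<in> sets (borel_CN N)"
  by (intro open_in_borel Hit_open)

lemma Within_borel: "openin (bdry_top N) U \<Longrightarrow> Within N U \<in> sets (borel_CN N)"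
  by (intro open_in_borel Within_open)

text \<open>Since there are only countably many basic sets, every Vietoris-open set is a
  countable union of them; hence the basic sets generate the Borel \<open>\<sigma>\<close>-algebra.\<close>

lemma sets_borel_CN: "sets (borel_CN N) = sigma_sets (CN N) (range (vbasic N))"
  unfolding sets_borel_CN_opens
proof (rule sigma_sets_eqI)
  fix b assume "b \<in> range (vbasic N)"
  then show "b \<in> sigma_sets (CN N) {U. openin (Vietoris N) U}" using vbasic_open by blast
next
  fix a assume a: "a \<in> {U. openin (Vietoris N) U}"
  interpret sigma_algebra "CN N" "sigma_sets (CN N) (range (vbasic N))"
    by (rule sigma_algebra_sigma_sets) (use vbasic_sub in blast)
  have vinter_in: "vinter N l \<in> sigma_sets (CN N) (range (vbasic N))" for l
  proof (induction l)
    case Nil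
    then show ?case by (simp add: vinter_def top)
  next
    case (Cons p l)
    have "vinter N (p # l) = vbasic N p \<inter> vinter N l"
      using vbasic_sub[of N p] by (auto simp: vinter_def)
    then show ?case using Cons by (simp add: Int)
  qed
  have "a = (\<Union>l\<in>{l. vinter N l \<subseteq> a}. vinter N l)"
    using refine_open[of N a] a by blast
  moreover have "(\<Union>l\<in>{l. vinter N l \<subseteq> a}. vinter N l) \<in> sigma_sets (CN N) (range (vbasic N))"
    by (rule countable_UN') (auto intro: vinter_in)
  ultimately show "a \<in> sigma_sets (CN N) (range (vbasic N))" by simp
qed

section \<open>Measurability of the intersection map\<close>

abbreviation borel_CN2 :: "nat \<Rightarrow> ((nat \<Rightarrow> int) set \<times> (nat \<Rightarrow> int) set) measure" where
  "borel_CN2 N \<equiv> borel_CN N \<Otimes>\<^sub>M borel_CN N"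

lemma space_borel_CN2: "space (borel_CN2 N) = CN N \<times> CN N"
  by (simp add: space_pair_measure)

definition cyl_nbhd :: "(nat \<Rightarrow> int) set \<Rightarrow> nat \<Rightarrow> (nat \<Rightarrow> int) set" where
  "cyl_nbhd T n = (\<Union>y\<in>T. pcyl y n)"

lemma closed_cyl_nbhd: "closed (cyl_nbhd T n)"
proof -
  have "- cyl_nbhd T n = (\<Union>z\<in>- cyl_nbhd T n. pcyl z n)"
  proof
    show "(\<Union>z\<in>- cyl_nbhd T n. pcyl z n) \<subseteq> - cyl_nbhd T n"
    proof
      fix w assume "w \<in> (\<Union>z\<in>- cyl_nbhd T n. pcyl z n)"
      then obtain z where z: "z \<notin> cyl_nbhd T n" "w \<in> pcyl z n" by auto
      have "y \<in> T \<Longrightarrow> w \<notin> pcyl y n" for y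
        using z by (auto simp: cyl_nbhd_def pcyl_def)
      then show "w \<in> - cyl_nbhd T n" by (auto simp: cyl_nbhd_def)
    qed
  qed auto
  moreover have "open (\<Union>z\<in>- cyl_nbhd T n. pcyl z n)" by (auto intro: open_pcyl)
  ultimately show ?thesis by (metis closed_def)
qed

lemma cyl_nbhd_antimono: "m \<le> n \<Longrightarrow> cyl_nbhd T n \<subseteq> cyl_nbhd T m"
  unfolding cyl_nbhd_def using pcyl_antimono by blast

text \<open>A compact set meeting every neighbourhood \<open>cyl_nbhd T n\<close> of a closed set \<open>T\<close> meets
  \<open>T\<close> itself (finite intersection property for the nested closed neighbourhoods).\<close>

lemma compact_meets_closed:
  assumes K: "compact K" and T: "closed T" and ne: "\<And>n. K \<inter> cyl_nbhd T n \<noteq> {}"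
  shows "K \<inter> T \<noteq> {}"
proof -
  have "K \<inter> \<Inter>(range (cyl_nbhd T)) \<noteq> {}"
  proof (rule compact_imp_fip[OF K])
    show "\<And>C. C \<in> range (cyl_nbhd T) \<Longrightarrow> closed C" using closed_cyl_nbhd by blast
    fix F' assume F': "finite F'" "F' \<subseteq> range (cyl_nbhd T)"
    then obtain I where I: "finite I" "F' = cyl_nbhd T ` I" by (meson finite_subset_image)
    have "i \<le> Max (insert 0 I)" if "i \<in> I" for i using I(1) that by simp
    then have "cyl_nbhd T (Max (insert 0 I)) \<subseteq> \<Inter>F'"
      using I(2) cyl_nbhd_antimono by blast
    then show "K \<inter> \<Inter>F' \<noteq> {}" using ne by blast
  qed
  then obtain x where x: "x \<in> K" "\<And>n. x \<in> cyl_nbhd T n" by blast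
  have "pcyl x m \<inter> T \<noteq> {}" for m
    using x(2)[of m] by (auto simp: cyl_nbhd_def pcyl_sym)
  then have "x \<in> T" using closed_pcyl_limit[OF T] by blast
  then show ?thesis using x(1) by blast
qed

lemma compact_meet_iff_prefixes:
  assumes S1: "compact S1" and S2: "closed S2" and C: "closed C"
  shows "S1 \<inter> S2 \<inter> C \<noteq> {} \<longleftrightarrow>
     (\<forall>n. \<exists>v. length v = n \<and> S1 \<inter> C \<inter> {y. starts_with v y} \<noteq> {}
                            \<and> S2 \<inter> C \<inter> {y. starts_with v y} \<noteq> {})"
proof
  assume "S1 \<inter> S2 \<inter> C \<noteq> {}"
  then obtain x where x: "x \<in> S1" "x \<in> S2" "x \<in> C" by blast
  show "\<forall>n. \<exists>v. length v = n \<and> S1 \<inter> C \<inter> {y. starts_with v y} \<noteq> {}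
                                   \<and> S2 \<inter> C \<inter> {y. starts_with v y} \<noteq> {}"
  proof
    fix n
    have "starts_with (map x [0..<n]) x" by (simp add: starts_with_map)
    then show "\<exists>v. length v = n \<and> S1 \<inter> C \<inter> {y. starts_with v y} \<noteq> {}
                                \<and> S2 \<inter> C \<inter> {y. starts_with v y} \<noteq> {}"
      using x by (intro exI[of _ "map x [0..<n]"]) auto
  qed
next
  assume H: "\<forall>n. \<exists>v. length v = n \<and> S1 \<inter> C \<inter> {y. starts_with v y} \<noteq> {}
                                    \<and> S2 \<inter> C \<inter> {y. starts_with v y} \<noteq> {}"
  have "(S1 \<inter> C) \<inter> cyl_nbhd (S2 \<inter> C) n \<noteq> {}" for n
  proof -
    obtain v where v: "length v = n" "S1 \<inter> C \<inter> {y. starts_with v y} \<noteq> {}"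
        "S2 \<inter> C \<inter> {y. starts_with v y} \<noteq> {}"
      using H by blast
    then obtain x y where xy: "x \<in> S1 \<inter> C" "starts_with v x" "y \<in> S2 \<inter> C" "starts_with v y"
      by blast
    then have "x \<in> pcyl y n" using v(1) by (auto simp: starts_with_def pcyl_def)
    then have "x \<in> cyl_nbhd (S2 \<inter> C) n" using xy(3) by (auto simp: cyl_nbhd_def)
    then show ?thesis using xy(1) by blast
  qed
  then have "(S1 \<inter> C) \<inter> (S2 \<inter> C) \<noteq> {}"
    by (rule compact_meets_closed[OF compact_Int_closed[OF S1 C] closed_Int[OF S2 C]])
  then show "S1 \<inter> S2 \<inter> C \<noteq> {}" by blast
qed

text \<open>The pairs whose intersection meets a clopen set \<open>C\<close> form a measurable set: by the
  previous lemma it is a countable intersection of countable unions of rectangles of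
  \<open>Hit\<close>-sets.\<close>

definition Meets :: "nat \<Rightarrow> (nat \<Rightarrow> int) set \<Rightarrow> ((nat \<Rightarrow> int) set \<times> (nat \<Rightarrow> int) set) set" where
  "Meets N C = {p \<in> CN N \<times> CN N. fst p \<inter> snd p \<inter> C \<noteq> {}}"

lemma Meets_measurable:
  assumes Co: "open C" and Cc: "closed C"
  shows "Meets N C \<in> sets (borel_CN2 N)"
proof -
  define H where "H v = Hit N (C \<inter> {y. starts_with v y} \<inter> bdry N)" for v
  define R where "R n = (\<Union>v\<in>{v::int list. length v = n}. H v \<times> H v)" for n
  have H_iff: "S \<in> H v \<longleftrightarrow> S \<in> CN N \<and> S \<inter> C \<inter> {y. starts_with v y} \<noteq> {}" for S v
    using CN_closed(2)[of S N] by (auto simp: H_def Hit_def)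
  have "Meets N C = (CN N \<times> CN N) \<inter> (\<Inter>n. R n)"
  proof (intro set_eqI)
    fix p
    show "p \<in> Meets N C \<longleftrightarrow> p \<in> (CN N \<times> CN N) \<inter> (\<Inter>n. R n)"
    proof (cases "p \<in> CN N \<times> CN N")
      case True
      then have c: "fst p \<in> CN N" "snd p \<in> CN N" by auto
      have "p \<in> R n \<longleftrightarrow> (\<exists>v. length v = n \<and> fst p \<inter> C \<inter> {y. starts_with v y} \<noteq> {}
                                   \<and> snd p \<inter> C \<inter> {y. starts_with v y} \<noteq> {})" for n
        using c by (auto simp: R_def H_iff mem_Times_iff)
      then show ?thesis
        using compact_meet_iff_prefixes[OF CN_compact[OF c(1)] CN_closed(1)[OF c(2)] Cc] True
        by (simp add: Meets_def)
    qed (auto simp: Meets_def)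
  qed
  moreover have "R n \<in> sets (borel_CN2 N)" for n
    unfolding R_def H_def
    by (rule sets.countable_UN')
       (auto intro!: pair_measureI Hit_borel openin_bdry_open open_Int Co open_starts_with)
  moreover have "CN N \<times> CN N \<in> sets (borel_CN2 N)"
    using sets.top[of "borel_CN2 N"] by (simp add: space_borel_CN2)
  ultimately show ?thesis
    by (simp add: sets.Int sets.countable_INT)
qed

text \<open>The pairs whose intersection is again an element of \<open>C\<^sub>N\<close>, i.e. has at least two
  points: these are the pairs meeting two distinct word cylinders of equal length.\<close>

definition Proper :: "nat \<Rightarrow> ((nat \<Rightarrow> int) set \<times> (nat \<Rightarrow> int) set) set" where
  "Proper N = {p \<in> CN N \<times> CN N. fst p \<inter> snd p \<in> CN N}"

lemma Proper_measurable: "Proper N \<in> sets (borel_CN2 N)"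
proof -
  define Q where "Q n = (\<Union>vv\<in>{vv::int list \<times> int list.
      length (fst vv) = n \<and> length (snd vv) = n \<and> fst vv \<noteq> snd vv}.
      Meets N {y. starts_with (fst vv) y} \<inter> Meets N {y. starts_with (snd vv) y})" for n
  have "Proper N = (\<Union>n. Q n)"
  proof (intro set_eqI iffI)
    fix p assume p: "p \<in> Proper N"
    then have c: "fst p \<in> CN N" "snd p \<in> CN N" and I: "fst p \<inter> snd p \<in> CN N"
      by (auto simp: Proper_def)
    then obtain x y where xy: "x \<in> fst p \<inter> snd p" "y \<in> fst p \<inter> snd p" "x \<noteq> y"
      by (auto simp: CN_def)
    then obtain i where i: "x i \<noteq> y i" by auto
    define v1 where "v1 = map x [0..<Suc i]"
    define v2 where "v2 = map y [0..<Suc i]"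
    have "v1 \<noteq> v2" using i unfolding v1_def v2_def
      by (metis lessI map_eq_conv atLeastLessThan_iff set_upt zero_le)
    moreover have "starts_with v1 x" "starts_with v2 y"
      unfolding v1_def v2_def starts_with_map by simp_all
    ultimately have "p \<in> Q (Suc i)"
      unfolding Q_def using xy c
      by (intro UN_I[of "(v1, v2)"]) (auto simp: Meets_def v1_def v2_def mem_Times_iff)
    then show "p \<in> (\<Union>n. Q n)" by blast
  next
    fix p assume "p \<in> (\<Union>n. Q n)"
    then obtain v1 v2 where v: "length v1 = length v2" "v1 \<noteq> v2"
      and h: "p \<in> Meets N {y. starts_with v1 y}" "p \<in> Meets N {y. starts_with v2 y}"
      unfolding Q_def by force
    from h obtain x y where xy: "x \<in> fst p \<inter> snd p" "starts_with v1 x"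
        "y \<in> fst p \<inter> snd p" "starts_with v2 y"
      unfolding Meets_def by blast
    have c: "fst p \<in> CN N" "snd p \<in> CN N" using h(1) by (auto simp: Meets_def)
    have "x \<noteq> y" using xy v starts_with_unique by blast
    moreover have "closed (fst p \<inter> snd p)" "fst p \<inter> snd p \<subseteq> bdry N"
      using CN_closed[OF c(1)] CN_closed[OF c(2)] by auto
    ultimately show "p \<in> Proper N"
      using xy c by (auto simp: Proper_def CN_def closedin_bdry_iff mem_Times_iff)
  qed
  moreover have "Q n \<in> sets (borel_CN2 N)" for n
    unfolding Q_def
    by (rule sets.countable_UN')
       (auto intro!: sets.Int Meets_measurable open_starts_with closed_starts_with)
  ultimately show ?thesis by auto
qed

text \<open>Preimages of the generating sets: \<open>S\<^sub>1 \<inter> S\<^sub>2\<close> lies inside a clopen \<open>C\<close> iff it does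
  not meet its complement, and it hits \<open>C\<close> iff it meets \<open>C\<close>.\<close>

lemma Ipre_vbasic: "Ipre N (vbasic N p) \<in> sets (borel_CN2 N)"
proof (cases p)
  case (Pair b ws)
  let ?C = "\<Union>w\<in>set ws. {y. starts_with w y}"
  have Co: "open ?C" by (auto intro: open_starts_with)
  have Cc: "closed ?C" by (auto intro!: closed_UN closed_starts_with)
  have sub: "fst q \<inter> snd q \<subseteq> bdry N" if "q \<in> Proper N" for q
    using that by (auto simp: Proper_def CN_def)
  show ?thesis
  proof (cases b)
    case True
    have "Ipre N (vbasic N p) = Proper N - Meets N (- ?C)"
    proof (intro set_eqI iffI)
      fix q assume "q \<in> Ipre N (vbasic N p)"
      then show "q \<in> Proper N - Meets N (- ?C)"
        using Pair True by (auto simp: Ipre_def Proper_def Meets_def Within_def word_cyls_def)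
    next
      fix q assume q: "q \<in> Proper N - Meets N (- ?C)"
      then show "q \<in> Ipre N (vbasic N p)"
        using sub[of q] Pair True by (auto simp: Ipre_def Proper_def Meets_def Within_def word_cyls_def)
    qed
    moreover have "Meets N (- ?C) \<in> sets (borel_CN2 N)"
      using Co Cc by (intro Meets_measurable) (simp_all only: open_Compl closed_Compl)
    ultimately show ?thesis using Proper_measurable by auto
  next
    case False
    have "Ipre N (vbasic N p) = Proper N \<inter> Meets N ?C"
    proof (intro set_eqI iffI)
      fix q assume "q \<in> Ipre N (vbasic N p)"
      then show "q \<in> Proper N \<inter> Meets N ?C"
        using Pair False by (auto simp: Ipre_def Proper_def Meets_def Hit_def word_cyls_def)
    next
      fix q assume q: "q \<in> Proper N \<inter> Meets N ?C"
      then show "q \<in> Ipre N (vbasic N p)"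
        using sub[of q] Pair False by (auto simp: Ipre_def Proper_def Meets_def Hit_def word_cyls_def)
    qed
    moreover have "Meets N ?C \<in> sets (borel_CN2 N)" using Co Cc by (intro Meets_measurable)
    ultimately show ?thesis using Proper_measurable by auto
  qed
qed

text \<open>Since preimages commute with complements (relative to \<open>Proper N\<close>) and countable
  unions, measurability extends from the generators to all Borel sets.\<close>

lemma Ipre_measurable_borel: "U \<in> sets (borel_CN N) \<Longrightarrow> Ipre N U \<in> sets (borel_CN2 N)"
  unfolding sets_borel_CN
proof (induction rule: sigma_sets.induct)
  case (Basic a)
  then show ?case using Ipre_vbasic by auto
next
  case Empty
  then show ?case by (simp add: Ipre_def)
next
  case (Compl a)
  have "Ipre N (CN N - a) = Proper N - Ipre N a"
    by (auto simp: Ipre_def Proper_def)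
  then show ?case using Compl.IH Proper_measurable by auto
next
  case (Union a)
  have "Ipre N (\<Union>i. a i) = (\<Union>i. Ipre N (a i))" by (auto simp: Ipre_def)
  then show ?case using Union.IH by auto
qed

lemma Ipre_measurable:
  assumes "sets M1 = sets (borel_CN N)" "sets M2 = sets (borel_CN N)" "U \<in> sets (borel_CN N)"
  shows "Ipre N U \<in> sets (M1 \<Otimes>\<^sub>M M2)"
  using Ipre_measurable_borel[OF assms(3)] sets_pair_measure_cong[OF assms(1,2)] by simp

section \<open>An exhaustion of \<open>C\<^sub>N\<close> by open compact sets\<close>

definition Wide :: "nat \<Rightarrow> nat \<Rightarrow> (nat \<Rightarrow> int) set set" where
  "Wide N n = {S \<in> CN N. \<exists>x\<in>S. \<exists>y\<in>S. \<exists>i<n. x i \<noteq> y i}"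

lemma Wide_mono: "m \<le> n \<Longrightarrow> Wide N m \<subseteq> Wide N n"
  unfolding Wide_def using less_le_trans by blast

lemma Wide_sub: "Wide N n \<subseteq> CN N"
  by (auto simp: Wide_def)

lemma UN_Wide: "(\<Union>n. Wide N n) = CN N"
proof
  show "CN N \<subseteq> (\<Union>n. Wide N n)"
  proof
    fix S assume S: "S \<in> CN N"
    then obtain x y where "x \<in> S" "y \<in> S" "x \<noteq> y" by (auto simp: CN_def)
    then obtain i where "x i \<noteq> y i" by auto
    then have "S \<in> Wide N (Suc i)" using S \<open>x \<in> S\<close> \<open>y \<in> S\<close> by (auto simp: Wide_def)
    then show "S \<in> (\<Union>n. Wide N n)" by blast
  qed
qed (use Wide_sub in blast)

lemma Wide_open: "openin (Vietoris N) (Wide N n)"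
proof (subst openin_subopen, intro ballI)
  fix S assume S: "S \<in> Wide N n"
  then obtain x y i where xy: "x \<in> S" "y \<in> S" "i < n" "x i \<noteq> y i" by (auto simp: Wide_def)
  let ?T = "Hit N (pcyl x n \<inter> bdry N) \<inter> Hit N (pcyl y n \<inter> bdry N)"
  have "openin (Vietoris N) ?T" by (intro openin_Int Hit_open openin_bdry_open open_pcyl)
  moreover have "S \<in> ?T" using S xy CN_closed(2)[of S N] by (auto simp: Hit_def Wide_def)
  moreover have "?T \<subseteq> Wide N n"
  proof
    fix S' assume "S' \<in> ?T"
    then obtain x' y' where h: "x' \<in> S'" "y' \<in> S'" "x' \<in> pcyl x n" "y' \<in> pcyl y n" "S' \<in> CN N"
      by (auto simp: Hit_def)
    then have "x' i \<noteq> y' i" using xy(3,4) by (auto simp: pcyl_def)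
    then show "S' \<in> Wide N n" using h xy(3) unfolding Wide_def by blast
  qed
  ultimately show "\<exists>T. openin (Vietoris N) T \<and> S \<in> T \<and> T \<subseteq> Wide N n" by blast
qed

lemma Wide_borel: "Wide N n \<in> sets (borel_CN N)"
  by (intro open_in_borel Wide_open)

text \<open>Compactness of \<open>Wide N n\<close> is proved with Alexander's subbase theorem.  Given a cover
  \<open>C\<close> by subbasic sets, the open sets \<open>V\<close> with \<open>Hit N V \<in> C\<close> play a special role: a
  closed subset \<open>K\<close> of the boundary covered by them is covered by finitely many (it is
  compact), so finitely many members of \<open>C\<close> cover every element of \<open>C\<^sub>N\<close> meeting \<open>K\<close>.\<close>

definition hit_opens :: "nat \<Rightarrow> (nat \<Rightarrow> int) set set set \<Rightarrow> (nat \<Rightarrow> int) set set" where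
  "hit_opens N C = {V. openin (bdry_top N) V \<and> Hit N V \<in> C}"

lemma Hit_subcover:
  assumes K: "closed K" "K \<subseteq> bdry N" and cov: "K \<subseteq> \<Union>(hit_opens N C)"
  shows "\<exists>G. finite G \<and> G \<subseteq> C \<and> (\<forall>S\<in>CN N. S \<inter> K \<noteq> {} \<longrightarrow> S \<in> \<Union>G)"
proof -
  have "compactin (bdry_top N) K"
    using compact_closed_in_bdry[OF K] K(2) by (simp add: bdry_top_def compactin_subtopology)
  moreover have "\<forall>V\<in>hit_opens N C. openin (bdry_top N) V" by (simp add: hit_opens_def)
  ultimately obtain F where F: "finite F" "F \<subseteq> hit_opens N C" "K \<subseteq> \<Union>F"
    using cov unfolding compactin_def by meson
  have "S \<in> \<Union>(Hit N ` F)" if "S \<in> CN N" "S \<inter> K \<noteq> {}" for S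
    using that F(3) by (auto simp: Hit_def)
  moreover have "Hit N ` F \<subseteq> C" using F(2) by (auto simp: hit_opens_def)
  ultimately show ?thesis using F(1) by (intro exI[of _ "Hit N ` F"]) auto
qed

text \<open>First case: some \<open>Within N U\<close> in the cover, together with the \<open>V\<close>'s, covers the whole
  boundary.  Then every element of \<open>C\<^sub>N\<close> is either inside \<open>U\<close> or meets the compact set
  \<open>\<partial>X - U\<close>.\<close>

lemma subcover_Within_case:
  assumes c: "Within N U \<in> C" and U: "openin (bdry_top N) U"
    and cov: "bdry N - U \<subseteq> \<Union>(hit_opens N C)"
  shows "\<exists>C'. finite C' \<and> C' \<subseteq> C \<and> CN N \<subseteq> \<Union>C'"
proof -
  obtain W where W: "open W" "U = W \<inter> bdry N" using U by (auto simp: bdry_top_def openin_open)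
  have "bdry N - U = bdry N \<inter> - W" using W by auto
  then have "closed (bdry N - U)" using W(1) closed_bdry by (auto intro!: closed_Int closed_Compl)
  then obtain G where G: "finite G" "G \<subseteq> C" "\<forall>S\<in>CN N. S \<inter> (bdry N - U) \<noteq> {} \<longrightarrow> S \<in> \<Union>G"
    using Hit_subcover[OF _ Diff_subset cov] by blast
  have "S \<in> Within N U \<union> \<Union>G" if S: "S \<in> CN N" for S
  proof (cases "S \<subseteq> U")
    case True
    then show ?thesis using S by (simp add: Within_def)
  next
    case False
    then have "S \<inter> (bdry N - U) \<noteq> {}" using CN_closed(2)[OF S] by blast
    then show ?thesis using G(3) S by simp
  qed
  then have "CN N \<subseteq> \<Union>(insert (Within N U) G)" by blast
  then show ?thesis using G c by (intro exI[of _ "insert (Within N U) G"]) simp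
qed

text \<open>Second case: the points \<open>Z\<close> of the boundary not covered by the \<open>V\<close>'s agree on their
  first \<open>n\<close> letters.  Then every element of \<open>Wide N n\<close> has a point differing from all
  points of \<open>Z\<close> among the first \<open>n\<close> letters, i.e. it meets the compact set \<open>K\<close> below.\<close>

lemma subcover_narrow_case:
  assumes agree: "\<And>x y i. x \<in> Z \<Longrightarrow> y \<in> Z \<Longrightarrow> i < n \<Longrightarrow> x i = y i"
    and cov: "bdry N - Z \<subseteq> \<Union>(hit_opens N C)"
  shows "\<exists>C'. finite C' \<and> C' \<subseteq> C \<and> Wide N n \<subseteq> \<Union>C'"
proof -
  define K where "K = bdry N - (\<Union>z\<in>Z. pcyl z n)"
  have "closed K"
    unfolding K_def Diff_eq by (intro closed_Int closed_bdry closed_Compl open_UN) (auto intro: open_pcyl)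
  moreover have "K \<subseteq> bdry N" "K \<subseteq> \<Union>(hit_opens N C)" using cov by (auto simp: K_def)
  ultimately obtain G where G: "finite G" "G \<subseteq> C" "\<forall>S\<in>CN N. S \<inter> K \<noteq> {} \<longrightarrow> S \<in> \<Union>G"
    using Hit_subcover by metis
  have "S \<in> \<Union>G" if S: "S \<in> Wide N n" for S
  proof -
    obtain x y i where xy: "x \<in> S" "y \<in> S" "i < n" "x i \<noteq> y i"
      using S by (auto simp: Wide_def)
    have "x \<notin> (\<Union>z\<in>Z. pcyl z n) \<or> y \<notin> (\<Union>z\<in>Z. pcyl z n)"
    proof (rule ccontr)
      assume "\<not> ?thesis"
      then obtain z1 z2 where "z1 \<in> Z" "z2 \<in> Z" "x \<in> pcyl z1 n" "y \<in> pcyl z2 n" by blast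
      then show False using agree xy(3,4) by (auto simp: pcyl_def)
    qed
    moreover have SC: "S \<in> CN N" using S Wide_sub by blast
    ultimately have "S \<inter> K \<noteq> {}" using xy(1,2) CN_closed(2)[OF SC] unfolding K_def by blast
    then show ?thesis using G(3) SC by blast
  qed
  then show ?thesis using G by blast
qed

text \<open>Let \<open>Z\<close> be the
  set of boundary points not covered by the sets \<open>V\<close> with \<open>Hit N V\<close> in the cover.  If
  \<open>Z \<in> Wide N n\<close>, then \<open>Z\<close> lies in a member of the cover, necessarily of the form
  \<open>Within N U\<close>, and the first case applies; otherwise the second one does.\<close>

lemma Wide_subbase_cover:
  assumes C: "C \<subseteq> vsubbase N" and cov: "Wide N n \<subseteq> \<Union>C"
  shows "\<exists>C'. finite C' \<and> C' \<subseteq> C \<and> Wide N n \<subseteq> \<Union>C'"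
proof -
  define Z where "Z = bdry N - \<Union>(hit_opens N C)"
  have Zcov: "bdry N - Z \<subseteq> \<Union>(hit_opens N C)" by (auto simp: Z_def)
  show ?thesis
  proof (cases "Z \<in> Wide N n")
    case True
    then obtain c where c: "c \<in> C" "Z \<in> c" using cov by blast
    then consider U where "openin (bdry_top N) U" "c = Within N U"
      | V where "openin (bdry_top N) V" "c = Hit N V"
      using C unfolding vsubbase_def by blast
    then show ?thesis
    proof cases
      case (1 U)
      then have "bdry N - U \<subseteq> \<Union>(hit_opens N C)" using c Zcov by (auto simp: Within_def)
      then obtain C' where "finite C'" "C' \<subseteq> C" "CN N \<subseteq> \<Union>C'"
        using subcover_Within_case[of N U C] 1 c by blast
      then show ?thesis using Wide_sub[of N n] by (intro exI[of _ C']) auto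
    next
      case (2 V)
      then have "V \<in> hit_opens N C" using c by (auto simp: hit_opens_def)
      moreover have "Z \<inter> V \<noteq> {}" using c 2 by (auto simp: Hit_def)
      ultimately show ?thesis by (auto simp: Z_def)
    qed
  next
    case False
    have Zc: "closed Z" "Z \<subseteq> bdry N"
    proof -
      have "openin (bdry_top N) (\<Union>(hit_opens N C))" by (auto simp: hit_opens_def)
      then have "closedin (bdry_top N) Z" unfolding Z_def
        using closedin_diff[OF closedin_topspace[of "bdry_top N"]] by (simp add: bdry_top_def)
      then show "closed Z" "Z \<subseteq> bdry N" by (simp_all add: closedin_bdry_iff)
    qed
    have "x i = y i" if "x \<in> Z" "y \<in> Z" "i < n" for x y i
    proof (rule ccontr)
      assume "x i \<noteq> y i"
      then have "x \<noteq> y" by auto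
      then have "Z \<in> CN N" using Zc that unfolding CN_def closedin_bdry_iff by blast
      then show False using False that \<open>x i \<noteq> y i\<close> unfolding Wide_def by blast
    qed
    then show ?thesis by (rule subcover_narrow_case[OF _ Zcov])
  qed
qed

text \<open>Alexander's subbase theorem is stated with finite intersections of subbasic sets,
  while the generated topology uses nonempty finite intersections; relative to a subset
  of \<open>C\<^sub>N\<close> (itself subbasic) the two agree.\<close>

lemma finite_intersections_relative:
  assumes "Dn \<subseteq> CN N"
  shows "(finite intersection_of (\<lambda>x. x \<in> vsubbase N) relative_to Dn)
       = (finite' intersection_of (\<lambda>x. x \<in> vsubbase N) relative_to Dn)"
proof (intro ext iffI)
  fix A assume "(finite intersection_of (\<lambda>x. x \<in> vsubbase N) relative_to Dn) A"
  then obtain F where F: "finite F" "F \<subseteq> vsubbase N" "Dn \<inter> \<Inter>F = A"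
    unfolding relative_to_def intersection_of_def by blast
  show "(finite' intersection_of (\<lambda>x. x \<in> vsubbase N) relative_to Dn) A"
  proof (cases "F = {}")
    case True
    have "(finite' intersection_of (\<lambda>x. x \<in> vsubbase N)) (CN N)"
      unfolding intersection_of_def using CN_in_vsubbase[of N] by (intro exI[of _ "{CN N}"]) simp
    moreover have "Dn \<inter> CN N = A" using True F assms by auto
    ultimately show ?thesis unfolding relative_to_def by blast
  next
    case False
    then show ?thesis using F unfolding relative_to_def intersection_of_def by blast
  qed
next
  fix A assume "(finite' intersection_of (\<lambda>x. x \<in> vsubbase N) relative_to Dn) A"
  then show "(finite intersection_of (\<lambda>x. x \<in> vsubbase N) relative_to Dn) A"
    unfolding relative_to_def intersection_of_def by blast
qed

lemma Wide_compact: "compactin (Vietoris N) (Wide N n)"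
proof -
  have "compact_space (subtopology (Vietoris N) (Wide N n))"
  proof (rule Alexander_subbase_alt[where \<B> = "vsubbase N" and U = "Wide N n"])
    show "Wide N n \<subseteq> \<Union>(vsubbase N)" using Wide_sub Union_vsubbase by blast
    show "\<And>C. C \<subseteq> vsubbase N \<Longrightarrow> Wide N n \<subseteq> \<Union>C \<Longrightarrow> \<exists>C'. finite C' \<and> C' \<subseteq> C \<and> Wide N n \<subseteq> \<Union>C'"
      by (rule Wide_subbase_cover)
    have "openin (subtopology (Vietoris N) (Wide N n)) = (openin (Vietoris N) relative_to Wide N n)"
      by (simp add: openin_relative_to)
    also have "openin (Vietoris N) = arbitrary union_of finite' intersection_of (\<lambda>x. x \<in> vsubbase N)"
      by (simp add: Vietoris_vsubbase generate_topology_on_eq[symmetric]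
          openin_topology_generated_by_iff[abs_def])
    finally have "openin (subtopology (Vietoris N) (Wide N n)) =
        arbitrary union_of (finite intersection_of (\<lambda>x. x \<in> vsubbase N) relative_to Wide N n)"
      by (simp add: arbitrary_union_of_relative_to finite_intersections_relative[OF Wide_sub])
    then show "topology (arbitrary union_of (finite intersection_of (\<lambda>x. x \<in> vsubbase N)
        relative_to Wide N n)) = subtopology (Vietoris N) (Wide N n)"
      by (simp add: topology_eq istopology_subbase)
  qed
  then show ?thesis using Wide_sub by (simp add: compactin_subspace)
qed

text \<open>Every compact set lies in a single \<open>Wide N n\<close>, since these form an increasing open
  cover.\<close>

lemma compact_in_Wide:
  assumes K: "compactin (Vietoris N) K" shows "\<exists>n. K \<subseteq> Wide N n"
proof -
  have "K \<subseteq> \<Union>(range (Wide N))"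
    using compactin_subset_topspace[OF K] UN_Wide by simp
  moreover have "\<forall>U\<in>range (Wide N). openin (Vietoris N) U" using Wide_open by blast
  ultimately obtain F where F: "finite F" "F \<subseteq> range (Wide N)" "K \<subseteq> \<Union>F"
    using K unfolding compactin_def by meson
  then obtain I where I: "finite I" "F = Wide N ` I" by (meson finite_subset_image)
  have "\<And>i. i \<in> I \<Longrightarrow> i \<le> Max (insert 0 I)" using I(1) by simp
  then have "\<Union>F \<subseteq> Wide N (Max (insert 0 I))" using I(2) Wide_mono by blast
  then show ?thesis using F(3) by blast
qed

lemma sigma_finite_Wide:
  assumes "sets M = sets (borel_CN N)" "\<And>n. emeasure M (Wide N n) < \<infinity>"
  shows "sigma_finite_measure M"
proof
  have "space M = CN N" using sets_eq_imp_space_eq[OF assms(1)] by simp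
  then show "\<exists>A. countable A \<and> A \<subseteq> sets M \<and> \<Union>A = space M \<and> (\<forall>a\<in>A. emeasure M a \<noteq> \<infinity>)"
    using assms Wide_borel UN_Wide by (intro exI[of _ "range (Wide N)"]) (auto simp: less_top)
qed

lemma SCurr_Wide_finite: "is_SCurr N \<mu> \<Longrightarrow> emeasure \<mu> (Wide N n) < \<infinity>"
  unfolding is_SCurr_def using Wide_compact by blast

lemma SCurr_sets: "is_SCurr N \<mu> \<Longrightarrow> sets \<mu> = sets (borel_CN N)"
  by (simp add: is_SCurr_def)

lemma SCurr_sigma_finite: "is_SCurr N \<mu> \<Longrightarrow> sigma_finite_measure \<mu>"
  by (rule sigma_finite_Wide[OF SCurr_sets SCurr_Wide_finite])

section \<open>The push-forward measure\<close>

lemma Ihat_sets: "sets (Ihat N M1 M2) = sets (borel_CN N)"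
  unfolding Ihat_def using sets.sets_measure_of_eq[of "borel_CN N"] by simp

text \<open>\<open>Ihat N M1 M2\<close> is the push-forward of the product measure: since \<open>I\<^sup>-\<^sup>1\<close> preserves
  disjoint countable unions, \<open>U \<mapsto> (M1 \<times> M2)(I\<^sup>-\<^sup>1 U)\<close> is countably additive.\<close>

lemma Ihat_emeasure:
  assumes s1: "sets M1 = sets (borel_CN N)" and s2: "sets M2 = sets (borel_CN N)"
    and U: "U \<in> sets (borel_CN N)"
  shows "emeasure (Ihat N M1 M2) U = emeasure (M1 \<Otimes>\<^sub>M M2) (Ipre N U)"
  unfolding Ihat_def
proof (rule emeasure_measure_of_sigma[OF _ _ _ U])
  show "sigma_algebra (CN N) (sets (borel_CN N))"
    using sets.sigma_algebra_axioms[of "borel_CN N"] by simp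
  show "positive (sets (borel_CN N)) (\<lambda>U. emeasure (M1 \<Otimes>\<^sub>M M2) (Ipre N U))"
    by (simp add: positive_def Ipre_def)
  show "countably_additive (sets (borel_CN N)) (\<lambda>U. emeasure (M1 \<Otimes>\<^sub>M M2) (Ipre N U))"
  proof (rule countably_additiveI)
    fix A :: "nat \<Rightarrow> _" assume A: "range A \<subseteq> sets (borel_CN N)" "disjoint_family A"
    have "Ipre N (\<Union>(range A)) = (\<Union>i. Ipre N (A i))" by (auto simp: Ipre_def)
    moreover have "range (\<lambda>i. Ipre N (A i)) \<subseteq> sets (M1 \<Otimes>\<^sub>M M2)"
      using A(1) Ipre_measurable[OF s1 s2] by auto
    moreover have "disjoint_family (\<lambda>i. Ipre N (A i))"
      using A(2) unfolding disjoint_family_on_def Ipre_def by auto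
    ultimately show "(\<Sum>i. emeasure (M1 \<Otimes>\<^sub>M M2) (Ipre N (A i)))
                     = emeasure (M1 \<Otimes>\<^sub>M M2) (Ipre N (\<Union>(range A)))"
      by (simp add: suminf_emeasure)
  qed
qed

lemma Ihat_emeasure_SCurr:
  "is_SCurr N \<mu> \<Longrightarrow> is_SCurr N \<nu> \<Longrightarrow> U \<in> sets (borel_CN N)
   \<Longrightarrow> emeasure (Ihat N \<mu> \<nu>) U = emeasure (\<mu> \<Otimes>\<^sub>M \<nu>) (Ipre N U)"
  by (rule Ihat_emeasure[OF SCurr_sets SCurr_sets])

definition act_C :: "int list \<Rightarrow> (nat \<Rightarrow> int) set \<Rightarrow> (nat \<Rightarrow> int) set" where
  "act_C h S = act_bdry h ` S"

lemma act_C_CN: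
  assumes h: "set h \<subseteq> letters N" and S: "S \<in> CN N"
  shows "act_C h S \<in> CN N"
proof -
  have Sb: "S \<subseteq> bdry N" and Sc: "closedin (bdry_top N) S" using S by (auto simp: CN_def)
  have "openin (bdry_top N) (bdry N - S)" using Sc
    by (metis closedin_def bdry_top_def topspace_euclidean_subtopology)
  then have "openin (bdry_top N) {x \<in> bdry N. act_bdry (inv_w h) x \<in> bdry N - S}"
    by (rule act_cont[OF set_inv_w[OF h]])
  moreover have "act_C h S = bdry N - {x \<in> bdry N. act_bdry (inv_w h) x \<in> bdry N - S}"
    unfolding act_C_def act_image_eq[OF h Sb] using act_bdry_in[OF set_inv_w[OF h]] by auto
  ultimately have c: "closedin (bdry_top N) (act_C h S)"
    using closedin_diff[OF closedin_topspace[of "bdry_top N"]] by (simp add: bdry_top_def)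
  obtain x y where xy: "x \<in> S" "y \<in> S" "x \<noteq> y" using S by (auto simp: CN_def)
  have "act_bdry h x \<noteq> act_bdry h y"
    using xy Sb act_bdry_inv_left[OF h] by (metis subsetD)
  moreover have "act_bdry h x \<in> act_C h S" "act_bdry h y \<in> act_C h S"
    using xy by (auto simp: act_C_def)
  moreover have "act_C h S \<subseteq> bdry N" using Sb act_bdry_in[OF h] by (auto simp: act_C_def)
  ultimately show ?thesis using c by (auto simp: CN_def)
qed

lemma act_C_inv_left: "set h \<subseteq> letters N \<Longrightarrow> S \<subseteq> bdry N \<Longrightarrow> act_C (inv_w h) (act_C h S) = S"
  unfolding act_C_def image_comp using act_bdry_inv_left by (simp add: subset_iff image_cong)

lemma act_C_inv_right: "set h \<subseteq> letters N \<Longrightarrow> S \<subseteq> bdry N \<Longrightarrow> act_C h (act_C (inv_w h) S) = S"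
  using act_C_inv_left[of "inv_w h" N S] set_inv_w[of h N] by simp

lemma act_C_Int:
  assumes "set h \<subseteq> letters N" "S \<subseteq> bdry N" "T \<subseteq> bdry N"
  shows "act_C h (S \<inter> T) = act_C h S \<inter> act_C h T"
  unfolding act_C_def
proof (rule inj_on_image_Int)
  show "inj_on (act_bdry h) (S \<union> T)"
    using assms by (intro inj_on_inverseI[of _ "act_bdry (inv_w h)"]) (auto simp: act_bdry_inv_left)
qed auto

text \<open>The action is Borel measurable: preimages of the generating sets are again
  \<open>Within\<close>- and \<open>Hit\<close>-sets of open sets, by continuity of the action on \<open>\<partial>X\<close>.\<close>

lemma act_C_measurable:
  assumes h: "set h \<subseteq> letters N"
  shows "act_C h \<in> measurable (borel_CN N) (borel_CN N)"
proof (rule measurable_sigma_sets[OF sets_borel_CN])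
  show "range (vbasic N) \<subseteq> Pow (CN N)" using vbasic_sub by blast
  show "act_C h \<in> space (borel_CN N) \<rightarrow> CN N" using act_C_CN[OF h] by auto
  fix y assume "y \<in> range (vbasic N)"
  then obtain b ws where y: "y = vbasic N (b, ws)" by auto
  define P where "P = {x \<in> bdry N. act_bdry h x \<in> word_cyls N ws}"
  have P: "openin (bdry_top N) P" unfolding P_def by (rule act_cont[OF h openin_word_cyls])
  have sub: "act_C h S \<subseteq> word_cyls N ws \<longleftrightarrow> S \<subseteq> P" if "S \<in> CN N" for S
    using that CN_closed(2)[OF that] act_bdry_in[OF h]
    unfolding P_def act_C_def word_cyls_def by auto
  have hit: "act_C h S \<inter> word_cyls N ws \<noteq> {} \<longleftrightarrow> S \<inter> P \<noteq> {}" if "S \<in> CN N" for S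
    using that CN_closed(2)[OF that] act_bdry_in[OF h]
    unfolding P_def act_C_def word_cyls_def by auto
  show "act_C h -` y \<inter> space (borel_CN N) \<in> sets (borel_CN N)"
  proof (cases b)
    case True
    have "act_C h -` y \<inter> space (borel_CN N) = Within N P"
      using y True sub act_C_CN[OF h] by (auto simp: Within_def)
    then show ?thesis using Within_borel[OF P] by simp
  next
    case False
    have "act_C h -` y \<inter> space (borel_CN N) = Hit N P"
      using y False hit act_C_CN[OF h] by (auto simp: Hit_def)
    then show ?thesis using Hit_borel[OF P] by simp
  qed
qed

lemma act_set_eq:
  assumes g: "set g \<subseteq> letters N" and U: "U \<subseteq> CN N"
  shows "act_set g U = act_C (inv_w g) -` U \<inter> CN N"
proof (intro set_eqI iffI)
  fix S assume "S \<in> act_set g U"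
  then obtain T where T: "T \<in> U" "S = act_C g T" by (auto simp: act_set_def act_C_def)
  then have "T \<in> CN N" using U by auto
  then have "act_C (inv_w g) S = T" "S \<in> CN N"
    using T act_C_inv_left[OF g] act_C_CN[OF g] CN_closed(2) by auto
  then show "S \<in> act_C (inv_w g) -` U \<inter> CN N" using T by auto
next
  fix S assume S: "S \<in> act_C (inv_w g) -` U \<inter> CN N"
  then have "S = act_C g (act_C (inv_w g) S)" using act_C_inv_right[OF g] CN_closed(2) by auto
  then show "S \<in> act_set g U" using S unfolding act_set_def act_C_def by auto
qed

lemma distr_act_C:
  assumes mu: "is_SCurr N \<mu>" and g: "g \<in> FN N"
  shows "distr \<mu> (borel_CN N) (act_C (inv_w g)) = \<mu>"
proof -
  have gl: "set g \<subseteq> letters N" using g by (simp add: FN_def)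
  have s: "sets \<mu> = sets (borel_CN N)" using mu by (rule SCurr_sets)
  have m: "act_C (inv_w g) \<in> measurable \<mu> (borel_CN N)"
    using act_C_measurable[OF set_inv_w[OF gl]] by (simp add: measurable_cong_sets[OF s])
  show ?thesis
  proof (rule measure_eqI)
    show "sets (distr \<mu> (borel_CN N) (act_C (inv_w g))) = sets \<mu>" using s by simp
    fix A assume "A \<in> sets (distr \<mu> (borel_CN N) (act_C (inv_w g)))"
    then have A: "A \<in> sets (borel_CN N)" by simp
    have "emeasure (distr \<mu> (borel_CN N) (act_C (inv_w g))) A
          = emeasure \<mu> (act_C (inv_w g) -` A \<inter> CN N)"
      using emeasure_distr[OF m A] sets_eq_imp_space_eq[OF s] by simp
    also have "\<dots> = emeasure \<mu> (act_set g A)"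
      using A sets_borel_sub by (subst act_set_eq[OF gl]) auto
    also have "\<dots> = emeasure \<mu> A" using mu g A by (simp add: is_SCurr_def)
    finally show "emeasure (distr \<mu> (borel_CN N) (act_C (inv_w g))) A = emeasure \<mu> A" .
  qed
qed

text \<open>Intersections are equivariant, so \<open>I\<^sup>-\<^sup>1 (g U)\<close> is the preimage of \<open>I\<^sup>-\<^sup>1 U\<close> under
  the diagonal action of \<open>g\<^sup>-\<^sup>1\<close>.\<close>

lemma Ipre_act_set:
  assumes g: "set g \<subseteq> letters N" and U: "U \<subseteq> CN N"
  shows "Ipre N (act_set g U)
       = (\<lambda>p. (act_C (inv_w g) (fst p), act_C (inv_w g) (snd p))) -` Ipre N U \<inter> (CN N \<times> CN N)"
proof -
  let ?h = "inv_w g"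
  have h: "set ?h \<subseteq> letters N" using set_inv_w[OF g] .
  have key: "S1 \<inter> S2 \<in> act_set g U \<longleftrightarrow> act_C ?h S1 \<inter> act_C ?h S2 \<in> U"
    if S: "S1 \<in> CN N" "S2 \<in> CN N" for S1 S2
  proof -
    have b: "S1 \<subseteq> bdry N" "S2 \<subseteq> bdry N" using S CN_closed(2) by auto
    have eqI: "act_C ?h (S1 \<inter> S2) = act_C ?h S1 \<inter> act_C ?h S2" using act_C_Int[OF h b] .
    show ?thesis
    proof
      assume "S1 \<inter> S2 \<in> act_set g U"
      then show "act_C ?h S1 \<inter> act_C ?h S2 \<in> U" using act_set_eq[OF g U] eqI by auto
    next
      assume A: "act_C ?h S1 \<inter> act_C ?h S2 \<in> U"
      then have "act_C g (act_C ?h (S1 \<inter> S2)) \<in> CN N" using eqI U act_C_CN[OF g] by auto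
      moreover have "S1 \<inter> S2 \<subseteq> bdry N" using b by auto
      ultimately have "S1 \<inter> S2 \<in> CN N" using act_C_inv_right[OF g, of "S1 \<inter> S2"] by simp
      then show "S1 \<inter> S2 \<in> act_set g U" using act_set_eq[OF g U] eqI A by auto
    qed
  qed
  show ?thesis
    unfolding Ipre_def using key act_C_CN[OF h] by auto
qed

lemma Ihat_invariant:
  assumes mu: "is_SCurr N \<mu>" and nu: "is_SCurr N \<nu>" and g: "g \<in> FN N"
    and U: "U \<in> sets (borel_CN N)"
  shows "emeasure (Ihat N \<mu> \<nu>) (act_set g U) = emeasure (Ihat N \<mu> \<nu>) U"
proof -
  have gl: "set g \<subseteq> letters N" using g by (simp add: FN_def)
  let ?h = "inv_w g"
  let ?P = "\<lambda>(x, y). (act_C ?h x, act_C ?h y)"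
  have s1: "sets \<mu> = sets (borel_CN N)" and s2: "sets \<nu> = sets (borel_CN N)"
    using mu nu by (simp_all add: SCurr_sets)
  have Ub: "U \<subseteq> CN N" using U sets_borel_sub by blast
  have AU: "act_set g U \<in> sets (borel_CN N)"
    using measurable_sets[OF act_C_measurable[OF set_inv_w[OF gl]] U]
    by (simp add: act_set_eq[OF gl Ub])
  have m1: "act_C ?h \<in> measurable \<mu> (borel_CN N)" and m2: "act_C ?h \<in> measurable \<nu> (borel_CN N)"
    using act_C_measurable[OF set_inv_w[OF gl]] by (simp_all add: measurable_cong_sets[OF s1]
        measurable_cong_sets[OF s2])
  have pd: "distr (\<mu> \<Otimes>\<^sub>M \<nu>) (borel_CN2 N) ?P = \<mu> \<Otimes>\<^sub>M \<nu>"
    using pair_measure_distr[OF m1 m2] SCurr_sigma_finite[OF nu]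
    by (simp add: distr_act_C[OF mu g] distr_act_C[OF nu g])
  have mP: "?P \<in> measurable (\<mu> \<Otimes>\<^sub>M \<nu>) (borel_CN2 N)"
    using m1 m2 by (simp add: measurable_pair_iff split_beta')
  have spP: "space (\<mu> \<Otimes>\<^sub>M \<nu>) = CN N \<times> CN N"
    using sets_eq_imp_space_eq[OF s1] sets_eq_imp_space_eq[OF s2] by (simp add: space_pair_measure)
  have "emeasure (Ihat N \<mu> \<nu>) (act_set g U) = emeasure (\<mu> \<Otimes>\<^sub>M \<nu>) (Ipre N (act_set g U))"
    by (rule Ihat_emeasure[OF s1 s2 AU])
  also have "\<dots> = emeasure (\<mu> \<Otimes>\<^sub>M \<nu>) (?P -` Ipre N U \<inter> space (\<mu> \<Otimes>\<^sub>M \<nu>))"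
    using Ipre_act_set[OF gl Ub] spP by (simp add: split_beta')
  also have "\<dots> = emeasure (distr (\<mu> \<Otimes>\<^sub>M \<nu>) (borel_CN2 N) ?P) (Ipre N U)"
    by (rule emeasure_distr[OF mP Ipre_measurable_borel[OF U], symmetric])
  also have "\<dots> = emeasure (Ihat N \<mu> \<nu>) U"
    using pd Ihat_emeasure[OF s1 s2 U] by simp
  finally show ?thesis .
qed

text \<open>Two sets whose intersection has two points differing among the first \<open>n\<close>
  letters have the same property, so \<open>I\<^sup>-\<^sup>1 (Wide N n) \<subseteq> Wide N n \<times> Wide N n\<close>.\<close>

lemma Ipre_sub_Wide:
  assumes "A \<subseteq> Wide N n" shows "Ipre N A \<subseteq> Wide N n \<times> Wide N n"
proof
  fix p assume "p \<in> Ipre N A"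
  then have c: "fst p \<in> CN N" "snd p \<in> CN N" and "fst p \<inter> snd p \<in> Wide N n"
    using assms by (auto simp: Ipre_def)
  then obtain x y i where "x \<in> fst p \<inter> snd p" "y \<in> fst p \<inter> snd p" "i < n" "x i \<noteq> y i"
    by (auto simp: Wide_def)
  then have "fst p \<in> Wide N n" "snd p \<in> Wide N n" using c unfolding Wide_def by blast+
  then show "p \<in> Wide N n \<times> Wide N n" by (simp add: mem_Times_iff)
qed

lemma pair_emeasure_Ipre_le:
  assumes mu: "is_SCurr N \<mu>" and nu: "is_SCurr N \<nu>" and A: "A \<subseteq> Wide N n"
  shows "emeasure (\<mu> \<Otimes>\<^sub>M \<nu>) (Ipre N A) \<le> emeasure \<mu> (Wide N n) * emeasure \<nu> (Wide N n)"
proof -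
  have s1: "sets \<mu> = sets (borel_CN N)" and s2: "sets \<nu> = sets (borel_CN N)"
    using mu nu by (simp_all add: SCurr_sets)
  have "emeasure (\<mu> \<Otimes>\<^sub>M \<nu>) (Ipre N A) \<le> emeasure (\<mu> \<Otimes>\<^sub>M \<nu>) (Wide N n \<times> Wide N n)"
    using Wide_borel s1 s2 by (intro emeasure_mono Ipre_sub_Wide[OF A]) auto
  also have "\<dots> = emeasure \<mu> (Wide N n) * emeasure \<nu> (Wide N n)"
    using sigma_finite_measure.emeasure_pair_measure_Times[OF SCurr_sigma_finite[OF nu],
        of "Wide N n" \<mu> "Wide N n"] Wide_borel s1 s2 by simp
  finally show ?thesis .
qed

lemma Ihat_compact:
  assumes mu: "is_SCurr N \<mu>" and nu: "is_SCurr N \<nu>" and K: "compactin (Vietoris N) K"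
  shows "emeasure (Ihat N \<mu> \<nu>) K < \<infinity>"
proof -
  obtain n where n: "K \<subseteq> Wide N n" using compact_in_Wide[OF K] by blast
  have "emeasure (Ihat N \<mu> \<nu>) K \<le> emeasure (Ihat N \<mu> \<nu>) (Wide N n)"
    using n Wide_borel by (intro emeasure_mono) (simp_all add: Ihat_sets)
  also have "\<dots> = emeasure (\<mu> \<Otimes>\<^sub>M \<nu>) (Ipre N (Wide N n))"
    by (rule Ihat_emeasure_SCurr[OF mu nu Wide_borel])
  also have "\<dots> \<le> emeasure \<mu> (Wide N n) * emeasure \<nu> (Wide N n)"
    by (rule pair_emeasure_Ipre_le[OF mu nu order_refl])
  also have "\<dots> < \<infinity>"
    using SCurr_Wide_finite[OF mu] SCurr_Wide_finite[OF nu] by (simp add: ennreal_mult_less_top)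
  finally show ?thesis .
qed

theorem Ihat_SCurr:
  assumes mu: "is_SCurr N \<mu>" and nu: "is_SCurr N \<nu>"
  shows "is_SCurr N (Ihat N \<mu> \<nu>)"
  unfolding is_SCurr_def
  using Ihat_sets Ihat_invariant[OF mu nu] Ihat_compact[OF mu nu] by blast

section \<open>Reduced words and the Cayley tree\<close>

lemma reduced_Nil [simp]: "reduced []" and reduced_single [simp]: "reduced [a]"
  by (auto simp: reduced_def)

lemma reduced_appendD: "reduced (xs @ ys) \<Longrightarrow> reduced xs"
  unfolding reduced_def by (metis length_append nth_append trans_less_add1 Suc_lessD)

lemma reduced_snoc2: "reduced (u @ [c, b]) \<Longrightarrow> b \<noteq> - c"
proof -
  assume r: "reduced (u @ [c, b])"
  have "Suc (length u) < length (u @ [c, b])" by simp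
  with r have "(u @ [c, b]) ! Suc (length u) \<noteq> - ((u @ [c, b]) ! length u)"
    unfolding reduced_def by blast
  then show ?thesis by (simp add: nth_append)
qed

lemma reduced_Cons: "reduced (c # u) \<longleftrightarrow> reduced u \<and> (u \<noteq> [] \<longrightarrow> hd u \<noteq> - c)"
proof
  assume H: "reduced (c # u)"
  have "reduced u" unfolding reduced_def
  proof (intro allI impI)
    fix i assume "Suc i < length u"
    then have "Suc (Suc i) < length (c # u)" by simp
    then have "(c # u) ! Suc (Suc i) \<noteq> - (c # u) ! Suc i" using H unfolding reduced_def by blast
    then show "u ! Suc i \<noteq> - u ! i" by simp
  qed
  moreover have "hd u \<noteq> - c" if un: "u \<noteq> []"
  proof -
    obtain d v where "u = d # v" using un by (meson neq_Nil_conv)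
    then have "Suc 0 < length (c # u)" by simp
    then have "(c # u) ! Suc 0 \<noteq> - (c # u) ! 0" using H unfolding reduced_def by blast
    then show ?thesis using \<open>u = d # v\<close> by simp
  qed
  ultimately show "reduced u \<and> (u \<noteq> [] \<longrightarrow> hd u \<noteq> - c)" by blast
next
  assume H: "reduced u \<and> (u \<noteq> [] \<longrightarrow> hd u \<noteq> - c)"
  show "reduced (c # u)" unfolding reduced_def
  proof (intro allI impI)
    fix i assume i: "Suc i < length (c # u)"
    show "(c # u) ! Suc i \<noteq> - (c # u) ! i"
    proof (cases i)
      case 0
      then have "u \<noteq> []" using i by auto
      then show ?thesis using H 0 by (cases u) auto
    next
      case (Suc k)
      then have "Suc k < length u" using i by simp
      then show ?thesis using H Suc unfolding reduced_def by simp
    qed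
  qed
qed

lemma mult_Nil [simp]: "mult [] w = w"
  by (simp add: mult_def)

lemma mult_Cons: "mult (c # u) w = cons_red c (mult u w)"
  by (simp add: mult_def)

lemma mult_snoc1:
  "reduced u \<Longrightarrow> mult u [a] = (if u \<noteq> [] \<and> last u = - a then butlast u else u @ [a])"
proof (induction u)
  case Nil then show ?case by simp
next
  case (Cons c u)
  have ru: "reduced u" and hu: "u \<noteq> [] \<Longrightarrow> hd u \<noteq> - c" using Cons.prems by (auto simp: reduced_Cons)
  show ?case
  proof (cases "u = []")
    case True then show ?thesis by (auto simp: mult_Cons cons_red_def)
  next
    case False
    note IH = Cons.IH[OF ru]
    show ?thesis
    proof (cases "last u = - a")
      case True
      show ?thesis
      proof (cases "butlast u")
        case Nil
        then show ?thesis using False True IH by (auto simp: mult_Cons cons_red_def)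
      next
        case (Cons d v)
        have "hd u = d" using Cons False by (metis append_butlast_last_id hd_append2 list.sel(1) list.simps(3))
        then show ?thesis using False True IH Cons hu by (auto simp: mult_Cons cons_red_def)
      qed
    next
      case False2: False
      obtain d v where uv: "u = d # v" using False by (cases u) auto
      then show ?thesis using False False2 IH hu by (auto simp: mult_Cons cons_red_def)
    qed
  qed
qed

lemma mult_inv_append: "mult (inv_w p) (p @ w) = w"
proof (induction p arbitrary: w rule: rev_induct)
  case (snoc d p)
  have "mult (inv_w (p @ [d])) ((p @ [d]) @ w) = cons_red (- d) (mult (inv_w p) (p @ (d # w)))"
    by (simp add: inv_w_snoc mult_Cons)
  also have "\<dots> = w" using snoc.IH[of "d # w"] by (simp add: cons_red_def)
  finally show ?case .
qed simp

lemma dX_Nil: "dX [] u = length u"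
  by (simp add: dX_def)

lemma FN_reduced: "u \<in> FN N \<Longrightarrow> reduced u" and FN_set: "u \<in> FN N \<Longrightarrow> set u \<subseteq> letters N"
  by (auto simp: FN_def)

lemma butlast_FN: "u \<in> FN N \<Longrightarrow> butlast u \<in> FN N"
  unfolding FN_def using reduced_appendD[of "butlast u" "[last u]"]
  by (cases "u = []") (auto simp: append_butlast_last_id in_set_butlastD)

lemma snoc_last_ne: "reduced (p @ [c]) \<Longrightarrow> p \<noteq> [] \<Longrightarrow> last p \<noteq> - c"
proof -
  assume r: "reduced (p @ [c])" and p: "p \<noteq> []"
  have e: "p @ [c] = butlast p @ [last p, c]" using p by simp
  have "reduced (butlast p @ [last p, c])" using r unfolding e .
  then have "c \<noteq> - last p" using reduced_snoc2[of "butlast p" "last p" c] by blast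
  then show ?thesis by auto
qed

lemma adj_cases:
  assumes "adj N u w"
  shows "u \<in> FN N" "\<exists>a\<in>letters N. w = (if u \<noteq> [] \<and> last u = - a then butlast u else u @ [a])"
  using assms by (auto simp: adj_def mult_snoc1 FN_reduced)

lemma adj_child: assumes "p \<in> FN N" "p @ [c] \<in> FN N" shows "adj N p (p @ [c])"
proof -
  have c: "c \<in> letters N" using assms(2) by (auto simp: FN_def)
  have "mult p [c] = p @ [c]"
    using mult_snoc1[OF FN_reduced[OF assms(1)], of c] snoc_last_ne[OF FN_reduced[OF assms(2)]]
    by auto
  then show ?thesis using assms(1) c unfolding adj_def by (intro conjI bexI[of _ c]) auto
qed

lemma adj_root:
  assumes "a \<in> letters N" shows "adj N [] [a]" "adj N [a] []"
  using assms unfolding adj_def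
  by (auto simp: FN_def mult_def cons_red_def intro!: bexI[of _ "- a"])


section \<open>Subtrees and subset cylinders\<close>

lemma SubD:
  assumes "T \<in> Sub N"
  shows "finite T" "T \<subseteq> FN N" "2 \<le> card T"
    "\<And>u v. u \<in> T \<Longrightarrow> v \<in> T \<Longrightarrow> (u, v) \<in> (edges_in N T)\<^sup>*"
  using assms by (auto simp: Sub_def)

lemma step_exists:
  assumes "T \<in> Sub N" "u \<in> T" "v \<in> T" "u \<noteq> v"
  shows "\<exists>w\<in>T. adj N u w"
  using SubD(4)[OF assms(1-3)] assms(4)
  by (cases rule: converse_rtranclE) (auto simp: edges_in_def)

lemma childless_leaf:
  assumes T: "T \<in> Sub N" "[] \<in> T" and u: "u \<in> T" "u \<noteq> []" and nochild: "\<And>c. u @ [c] \<notin> T"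
  shows "{w \<in> T. adj N u w} = {butlast u}" "deg N T u = 1"
proof -
  have "{w \<in> T. adj N u w} \<subseteq> {butlast u}"
    using nochild adj_cases(2)[of N u] by (fastforce split: if_splits)
  moreover obtain w where "w \<in> T" "adj N u w" using step_exists[OF T(1) u(1) T(2) u(2)] by blast
  ultimately show "{w \<in> T. adj N u w} = {butlast u}" by blast
  then show "deg N T u = 1" by (simp add: deg_def)
qed

text \<open>The trees in \<open>R\<^sub>1\<close> are stars of radius one around \<open>1\<close>; in particular there are
  finitely many of them.\<close>

lemma R1_length: assumes T: "T \<in> R1 N" shows "\<forall>u\<in>T. length u \<le> 1"
proof (rule ccontr)
  assume "\<not> (\<forall>u\<in>T. length u \<le> 1)"
  then obtain u0 where u0: "u0 \<in> T" "length u0 \<ge> 2" by (auto simp: not_le)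
  have TS: "T \<in> Sub N" and T0: "[] \<in> T"
    and leaf: "\<And>u. u \<in> T \<Longrightarrow> deg N T u = 1 \<Longrightarrow> dX [] u = 1"
    using T by (auto simp: R1_def)
  have fT: "finite T" using SubD(1)[OF TS] .
  have "Max (length ` T) \<in> length ` T" using fT u0(1) by (intro Max_in) auto
  then obtain u where u: "u \<in> T" "length u = Max (length ` T)" by auto
  have "length u0 \<le> Max (length ` T)" using fT u0(1) by simp
  then have long: "length u \<ge> 2" using u(2) u0(2) by simp
  have "u @ [c] \<notin> T" for c
  proof
    assume "u @ [c] \<in> T"
    then have "length (u @ [c]) \<le> Max (length ` T)" using fT by (meson Max_ge finite_imageI imageI)
    then show False using u(2) by simp
  qed
  then have "deg N T u = 1" using childless_leaf(2)[OF TS T0 u(1)] long by fastforce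
  then show False using leaf[OF u(1)] long by (simp add: dX_Nil)
qed

lemma finite_R1: "finite (R1 N)"
proof -
  have "R1 N \<subseteq> Pow {xs. set xs \<subseteq> letters N \<and> length xs \<le> 1}"
  proof
    fix T assume T: "T \<in> R1 N"
    then have "T \<subseteq> FN N" using SubD(2) by (auto simp: R1_def)
    then show "T \<in> Pow {xs. set xs \<subseteq> letters N \<and> length xs \<le> 1}"
      using R1_length[OF T] by (auto simp: FN_def)
  qed
  moreover have "finite (Pow {xs. set xs \<subseteq> letters N \<and> length xs \<le> 1})"
    using finite_lists_length_le[OF finite_letters] by simp
  ultimately show ?thesis by (rule finite_subset)
qed

lemma act_inv_prefix_shift: "starts_with u x \<Longrightarrow> act_bdry (inv_w u) x = (\<lambda>n. x (n + length u))"
proof (induction u rule: rev_induct)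
  case (snoc c u)
  have pu: "starts_with u x" using snoc.prems by (auto simp: starts_with_def nth_append)
  have xc: "x (length u) = c" using snoc.prems by (auto simp: starts_with_def)
  have "act_bdry (inv_w (u @ [c])) x = cons_red_inf (- c) (\<lambda>n. x (n + length u))"
    using snoc.IH[OF pu] by (simp add: inv_w_snoc act_bdry_append)
  also have "\<dots> = (\<lambda>n. x (n + length (u @ [c])))"
    using xc by (auto simp: cons_red_inf_def intro!: ext)
  finally show ?case .
qed simp

lemma act_inv_first_letter:
  "reduced (u @ [b]) \<Longrightarrow> act_bdry (inv_w u) x 0 = b \<Longrightarrow> starts_with (u @ [b]) x"
proof (induction u arbitrary: b rule: rev_induct)
  case Nil then show ?case by (simp add: starts_with_def)
next
  case (snoc c u)
  let ?y = "act_bdry (inv_w u) x"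
  have eq: "act_bdry (inv_w (u @ [c])) x = cons_red_inf (- c) ?y"
    by (simp add: inv_w_snoc act_bdry_append)
  have bc: "b \<noteq> - c" using reduced_snoc2[of u c b] snoc.prems(1) by simp
  show ?case
  proof (cases "?y 0 = c")
    case True
    have "reduced (u @ [c])" using snoc.prems(1) reduced_appendD[of "u @ [c]" "[b]"] by simp
    then have p1: "starts_with (u @ [c]) x" using snoc.IH True by blast
    then have "?y = (\<lambda>n. x (n + length u))"
      by (intro act_inv_prefix_shift) (auto simp: starts_with_def nth_append)
    moreover have "cons_red_inf (- c) ?y 0 = ?y 1" using True by (simp add: cons_red_inf_def)
    ultimately have "x (Suc (length u)) = b" using snoc.prems(2) eq by simp
    then show ?thesis using p1 by (auto simp: starts_with_def nth_append less_Suc_eq)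
  next
    case False
    then have "cons_red_inf (- c) ?y 0 = - c" by (simp add: cons_red_inf_def)
    then show ?thesis using snoc.prems(2) eq bc by simp
  qed
qed

lemma Cyl_edge:
  assumes "reduced (p @ [c])" "\<xi> \<in> Cyl N (p, p @ [c])"
  shows "\<xi> 0 = hd (p @ [c])"
proof -
  have "[act_bdry (inv_w p) \<xi> 0] = mult (inv_w p) (p @ [c])" using assms(2) by (simp add: Cyl_def)
  then have "act_bdry (inv_w p) \<xi> 0 = c" by (simp add: mult_inv_append)
  then have "starts_with (p @ [c]) \<xi>" by (rule act_inv_first_letter[OF assms(1)])
  then show ?thesis by (simp add: starts_with_def hd_conv_nth)
qed

lemma Cyl_root_edge:
  assumes "\<xi> \<in> Cyl N ([a], [])" shows "\<xi> 0 \<noteq> a"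
proof
  assume a: "\<xi> 0 = a"
  have b: "\<xi> \<in> bdry N" using assms by (simp add: Cyl_def)
  have "cons_red_inf (- a) \<xi> 0 = - a"
    using assms by (simp add: Cyl_def inv_w_def mult_def cons_red_def)
  moreover have "cons_red_inf (- a) \<xi> 0 = \<xi> 1" using a by (simp add: cons_red_inf_def)
  ultimately show False using bdryD(2)[OF b, of 0] a by simp
qed

lemma Cyl_Nil: "Cyl N ([], v) = {\<xi> \<in> bdry N. [\<xi> 0] = v}"
  by (simp add: Cyl_def)

lemma Cyl_open:
  assumes e: "set (fst e) \<subseteq> letters N"
  shows "openin (bdry_top N) (Cyl N e)"
proof -
  let ?h = "inv_w (fst e)"
  define Z where "Z = {\<zeta> \<in> bdry N. [\<zeta> 0] = mult ?h (snd e)}"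
  have "openin (bdry_top N) Z"
    unfolding openin_bdry_iff
  proof (intro conjI ballI)
    fix \<zeta> assume "\<zeta> \<in> Z"
    then have "pcyl \<zeta> 1 \<inter> bdry N \<subseteq> Z" by (auto simp: Z_def pcyl_def)
    then show "\<exists>m. pcyl \<zeta> m \<inter> bdry N \<subseteq> Z" by blast
  qed (auto simp: Z_def)
  moreover have "Cyl N e = {\<xi> \<in> bdry N. act_bdry ?h \<xi> \<in> Z}"
    using act_bdry_in[OF set_inv_w[OF e]] by (auto simp: Cyl_def Z_def)
  ultimately show ?thesis using act_cont[OF set_inv_w[OF e]] by simp
qed

lemma SCyl_borel:
  assumes T: "T \<in> Sub N"
  shows "SCyl N T \<in> sets (borel_CN N)"
proof -
  let ?E = "terminal_edges N T"
  have "?E \<subseteq> T \<times> T" by (auto simp: terminal_edges_def edges_in_def)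
  then have fE: "finite ?E" using SubD(1)[OF T] by (meson finite_SigmaI finite_subset)
  have "set (fst e) \<subseteq> letters N" if "e \<in> ?E" for e
  proof -
    have "fst e \<in> T" using that by (auto simp: terminal_edges_def edges_in_def)
    then show ?thesis using SubD(2)[OF T] FN_set by blast
  qed
  then have co: "\<And>e. e \<in> ?E \<Longrightarrow> openin (bdry_top N) (Cyl N e)" using Cyl_open by blast
  let ?W = "\<Union>e\<in>?E. Cyl N e"
  have "SCyl N T = Within N ?W \<inter> (CN N \<inter> (\<Inter>e\<in>?E. Hit N (Cyl N e)))"
    by (auto simp: SCyl_def Within_def Hit_def)
  moreover have "CN N \<inter> (\<Inter>e\<in>?E. Hit N (Cyl N e)) \<in> sets (borel_CN N)"
    using fE co Hit_borel sets.top[of "borel_CN N"]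
    by (cases "?E = {}") (auto intro!: sets.finite_INT sets.Int)
  moreover have "openin (bdry_top N) ?W" using co by blast
  ultimately show ?thesis using Within_borel by (simp add: sets.Int)
qed

lemma terminal_edge_childless:
  assumes T: "T \<in> Sub N" "[] \<in> T" and u: "u \<in> T" "u \<noteq> []" and nochild: "\<And>c. u @ [c] \<notin> T"
  shows "(butlast u, u) \<in> terminal_edges N T"
proof -
  note leaf = childless_leaf[OF T u nochild]
  have uF: "u \<in> FN N" using u(1) SubD(2)[OF T(1)] by blast
  have "adj N (butlast u) u"
    using adj_child[OF butlast_FN[OF uF], of "last u"] uF u(2) by simp
  moreover have "butlast u \<in> T" using leaf(1) by blast
  ultimately show ?thesis using u(1) leaf(2) by (auto simp: terminal_edges_def edges_in_def)
qed

lemma terminal_edge_root: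
  assumes T: "T \<in> Sub N" "[] \<in> T" and hd: "\<And>v. v \<in> T \<Longrightarrow> v \<noteq> [] \<Longrightarrow> hd v = a"
  shows "([a], []) \<in> terminal_edges N T"
proof -
  obtain v where v: "v \<in> T" "v \<noteq> []"
  proof -
    have "T \<noteq> {[]}" using SubD(3)[OF T(1)] by auto
    then show thesis using that T(2) by blast
  qed
  have "{w \<in> T. adj N [] w} \<subseteq> {[a]}"
  proof
    fix w assume w: "w \<in> {w \<in> T. adj N [] w}"
    then obtain c where "w = [c]" using adj_cases(2)[of N "[]" w] by auto
    then show "w \<in> {[a]}" using hd[of w] w by auto
  qed
  moreover obtain w where "w \<in> T" "adj N [] w" using step_exists[OF T(1) T(2) v(1)] v(2) by metis
  ultimately have eq: "{w \<in> T. adj N [] w} = {[a]}" by blast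
  then have "[a] \<in> T" by blast
  moreover have "a \<in> letters N" using \<open>[a] \<in> T\<close> SubD(2)[OF T(1)] by (auto simp: FN_def)
  ultimately show ?thesis
    using T(2) eq adj_root by (auto simp: terminal_edges_def edges_in_def deg_def)
qed

text \<open>If \<open>S \<in> SCyl T\<close> with \<open>1 \<in> T\<close> had all its points beginning with the same letter \<open>a\<close>,
  consider a longest vertex \<open>u\<close> of \<open>T\<close> not beginning with \<open>a\<close> (possibly \<open>u = 1\<close>).  Either
  \<open>u \<noteq> 1\<close> is childless, and \<open>S\<close> meets the cylinder of the terminal edge into \<open>u\<close>, whose
  points begin with \<open>hd u \<noteq> a\<close>; or all other vertices begin with \<open>a\<close>, and \<open>S\<close> meets the
  cylinder of the terminal edge \<open>([a], 1)\<close>, whose points do not begin with \<open>a\<close>.\<close>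

lemma SCyl_Wide1:
  assumes T: "T \<in> Sub1 N" and S: "S \<in> SCyl N T"
  shows "S \<in> Wide N 1"
proof (rule ccontr)
  assume nW: "S \<notin> Wide N 1"
  have TS: "T \<in> Sub N" and T0: "[] \<in> T" using T by (auto simp: Sub1_def)
  have SC: "S \<in> CN N" and meet: "\<And>e. e \<in> terminal_edges N T \<Longrightarrow> S \<inter> Cyl N e \<noteq> {}"
    using S by (auto simp: SCyl_def)
  obtain x0 where x0: "x0 \<in> S" using SC by (auto simp: CN_def)
  define a where "a = x0 0"
  have allS: "\<And>x. x \<in> S \<Longrightarrow> x 0 = a"
    using nW SC x0 unfolding Wide_def a_def by auto
  define T' where "T' = {u \<in> T. u = [] \<or> hd u \<noteq> a}"
  have fT': "finite T'" using SubD(1)[OF TS] unfolding T'_def by simp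
  have "Max (length ` T') \<in> length ` T'" using fT' T0 unfolding T'_def by (intro Max_in) auto
  then obtain u where u: "u \<in> T'" "length u = Max (length ` T')" by auto
  have longest: "length v \<le> length u" if "v \<in> T'" for v using fT' that u(2) by simp
  show False
  proof (cases "u = []")
    case False
    have uT: "u \<in> T" and hu: "hd u \<noteq> a" using u(1) False unfolding T'_def by auto
    have "u @ [c] \<in> T' \<longleftrightarrow> u @ [c] \<in> T" for c using hu False unfolding T'_def by auto
    then have "u @ [c] \<notin> T" for c using longest[of "u @ [c]"] by auto
    then obtain \<xi> where \<xi>: "\<xi> \<in> S" "\<xi> \<in> Cyl N (butlast u, u)"
      using meet[OF terminal_edge_childless[OF TS T0 uT False]] by blast
    have "\<xi> 0 = hd u"
      using Cyl_edge[of "butlast u" "last u" \<xi> N] \<xi>(2) False FN_reduced SubD(2)[OF TS] uT by auto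
    then show False using allS[OF \<xi>(1)] hu by simp
  next
    case True
    have "hd v = a" if "v \<in> T" "v \<noteq> []" for v
      using that longest[of v] True unfolding T'_def by force
    then obtain \<xi> where "\<xi> \<in> S" "\<xi> \<in> Cyl N ([a], [])"
      using meet[OF terminal_edge_root[OF TS T0]] by blast
    then show False using allS Cyl_root_edge by blast
  qed
qed

definition star :: "int set \<Rightarrow> int list set" where
  "star A = insert [] ((\<lambda>a. [a]) ` A)"

lemma star_cases: "u \<in> star A \<Longrightarrow> u = [] \<or> (\<exists>a\<in>A. u = [a])"
  by (auto simp: star_def)

lemma star_root_nbrs:
  assumes "A \<subseteq> letters N" shows "{w \<in> star A. adj N [] w} = (\<lambda>a. [a]) ` A"
proof
  show "{w \<in> star A. adj N [] w} \<subseteq> (\<lambda>a. [a]) ` A"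
  proof
    fix w assume w: "w \<in> {w \<in> star A. adj N [] w}"
    then obtain c where "w = [c]" using adj_cases(2)[of N "[]" w] by auto
    then show "w \<in> (\<lambda>a. [a]) ` A" using w star_cases by auto
  qed
  show "(\<lambda>a. [a]) ` A \<subseteq> {w \<in> star A. adj N [] w}"
    using assms adj_root(1) by (auto simp: star_def)
qed

lemma star_leaf_nbrs:
  assumes "A \<subseteq> letters N" "a \<in> A" shows "{w \<in> star A. adj N [a] w} = {[]}"
proof -
  have "w = []" if w: "w \<in> star A" "adj N [a] w" for w
  proof -
    obtain c where "w = (if last [a] = - c then butlast [a] else [a] @ [c])"
      using adj_cases(2)[OF w(2)] by auto
    then have "w = [] \<or> w = [a, c]" by (auto split: if_splits)
    then show ?thesis using star_cases[OF w(1)] by auto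
  qed
  then show ?thesis using assms adj_root(2)[of a N] by (auto simp: star_def)
qed

lemma star_R1:
  assumes A: "A \<subseteq> letters N" "2 \<le> card A"
  shows "star A \<in> R1 N"
proof -
  have fA: "finite A" using A(1) finite_letters finite_subset by blast
  have TF: "star A \<subseteq> FN N" using A(1) by (auto simp: star_def FN_def)
  have root_adj: "([], [a]) \<in> edges_in N (star A)" "([a], []) \<in> edges_in N (star A)" if "a \<in> A" for a
    using that A(1) adj_root by (auto simp: edges_in_def star_def)
  have "(u, []) \<in> (edges_in N (star A))\<^sup>*" "([], u) \<in> (edges_in N (star A))\<^sup>*" if "u \<in> star A" for u
    using star_cases[OF that] root_adj by auto
  then have conn: "(u, v) \<in> (edges_in N (star A))\<^sup>*" if "u \<in> star A" "v \<in> star A" for u v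
    using that by (meson rtrancl_trans)
  have "card ((\<lambda>a. [a]) ` A) = card A" by (simp add: card_image inj_on_def)
  then have deg0: "2 \<le> deg N (star A) []"
    using A by (simp add: deg_def star_root_nbrs)
  moreover have "2 \<le> card (star A)"
  proof -
    have "card ((\<lambda>a. [a]) ` A) \<le> card (star A)"
      using fA by (intro card_mono) (auto simp: star_def)
    then show ?thesis using A(2) \<open>card ((\<lambda>a. [a]) ` A) = card A\<close> by simp
  qed
  ultimately show ?thesis
    using fA TF conn star_cases
    by (auto simp: R1_def Sub_def star_def dX_Nil)
qed

lemma terminal_edges_star:
  assumes A: "A \<subseteq> letters N" "2 \<le> card A"
  shows "terminal_edges N (star A) = (\<lambda>a. ([], [a])) ` A"
proof
  have fA: "finite A" using A(1) finite_letters finite_subset by blast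
  have deg0: "deg N (star A) [] \<noteq> 1"
    using A fA by (simp add: deg_def star_root_nbrs card_image inj_on_def)
  show "terminal_edges N (star A) \<subseteq> (\<lambda>a. ([], [a])) ` A"
  proof
    fix e assume "e \<in> terminal_edges N (star A)"
    then obtain p v where pv: "e = (p, v)" "p \<in> star A" "v \<in> star A" "adj N p v" "deg N (star A) v = 1"
      by (auto simp: terminal_edges_def edges_in_def)
    then obtain a where a: "a \<in> A" "v = [a]" using star_cases deg0 by blast
    have "p = []"
    proof (rule ccontr)
      assume "p \<noteq> []"
      then obtain b where "p = [b]" using star_cases[OF pv(2)] by blast
      moreover obtain c where "v = (if p \<noteq> [] \<and> last p = - c then butlast p else p @ [c])"
        using adj_cases(2)[OF pv(4)] by blast
      ultimately show False using a(2) by (auto split: if_splits)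
    qed
    then show "e \<in> (\<lambda>a. ([], [a])) ` A" using pv(1) a by auto
  qed
  show "(\<lambda>a. ([], [a])) ` A \<subseteq> terminal_edges N (star A)"
    using A adj_root(1) star_leaf_nbrs
    by (auto simp: terminal_edges_def edges_in_def deg_def star_def)
qed

text \<open>Every \<open>S \<in> Wide N 1\<close> lies in the subset cylinder of the star of its first letters.\<close>

lemma Wide1_SCyl:
  assumes S: "S \<in> Wide N 1"
  shows "\<exists>T\<in>R1 N. S \<in> SCyl N T"
proof -
  define A where "A = (\<lambda>\<xi>. \<xi> 0) ` S"
  have SC: "S \<in> CN N" using S by (auto simp: Wide_def)
  have Sb: "S \<subseteq> bdry N" using CN_closed(2)[OF SC] .
  have A: "A \<subseteq> letters N" using Sb bdryD(1) by (auto simp: A_def)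
  obtain x y where xy: "x \<in> S" "y \<in> S" "x 0 \<noteq> y 0" using S by (auto simp: Wide_def)
  have "finite A" using A finite_letters finite_subset by blast
  then have "card {x 0, y 0} \<le> card A" using xy by (intro card_mono) (auto simp: A_def)
  then have cA: "2 \<le> card A" using xy(3) by simp
  have Cyl: "\<xi> \<in> Cyl N ([], [\<xi> 0])" if "\<xi> \<in> S" for \<xi> using that Sb by (auto simp: Cyl_Nil)
  have "S \<in> SCyl N (star A)"
    unfolding SCyl_def terminal_edges_star[OF A cA]
  proof (intro CollectI conjI ballI SC)
    show "S \<subseteq> (\<Union>e\<in>(\<lambda>a. ([] :: int list, [a])) ` A. Cyl N e)" using Cyl by (auto simp: A_def)
    fix e assume "e \<in> (\<lambda>a. ([] :: int list, [a])) ` A"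
    then obtain \<xi> where "\<xi> \<in> S" "e = ([], [\<xi> 0])" by (auto simp: A_def)
    then show "S \<inter> Cyl N e \<noteq> {}" using Cyl by blast
  qed
  then show ?thesis using star_R1[OF A cA] by blast
qed

lemma Wide1_le_V:
  assumes mu: "is_SCurr N \<mu>"
  shows "emeasure \<mu> (Wide N 1) \<le> V N \<mu>"
proof -
  have sb: "\<And>T. T \<in> R1 N \<Longrightarrow> SCyl N T \<in> sets \<mu>"
    using SCyl_borel SCurr_sets[OF mu] by (auto simp: R1_def)
  have "Wide N 1 \<subseteq> (\<Union>T\<in>R1 N. SCyl N T)" using Wide1_SCyl by blast
  then have "emeasure \<mu> (Wide N 1) \<le> emeasure \<mu> (\<Union>T\<in>R1 N. SCyl N T)"
    using sb finite_R1 by (intro emeasure_mono) (auto intro!: sets.finite_UN)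
  also have "\<dots> \<le> (\<Sum>T\<in>R1 N. emeasure \<mu> (SCyl N T))"
    using sb finite_R1 by (intro emeasure_subadditive_finite) auto
  finally show ?thesis by (simp add: V_def)
qed

theorem V_bound:
  assumes mu: "is_SCurr N \<mu>" and nu: "is_SCurr N \<nu>" and T: "T \<in> Sub1 N"
  shows "emeasure (\<mu> \<Otimes>\<^sub>M \<nu>) (Ipre N (SCyl N T)) \<le> V N \<mu> * V N \<nu>"
proof -
  have "emeasure (\<mu> \<Otimes>\<^sub>M \<nu>) (Ipre N (SCyl N T)) \<le> emeasure \<mu> (Wide N 1) * emeasure \<nu> (Wide N 1)"
    using SCyl_Wide1[OF T] by (intro pair_emeasure_Ipre_le[OF mu nu]) blast
  also have "\<dots> \<le> V N \<mu> * V N \<nu>"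
    using Wide1_le_V[OF mu] Wide1_le_V[OF nu] by (intro mult_mono) auto
  finally show ?thesis .
qed

section \<open>Bilinearity\<close>

text \<open>Tonelli's theorem: the product measure depends linearly on each factor.\<close>

lemma pair_measure_lincomb_left:
  assumes "sigma_finite_measure \<rho>" "sigma_finite_measure \<mu>" "sigma_finite_measure \<mu>'"
    and \<nu>: "sigma_finite_measure \<nu>"
    and s: "sets \<rho> = sets \<mu>" "sets \<mu>' = sets \<mu>"
    and r: "\<forall>U\<in>sets \<mu>. emeasure \<rho> U = ennreal a * emeasure \<mu> U + ennreal b * emeasure \<mu>' U"
    and A: "A \<in> sets (\<mu> \<Otimes>\<^sub>M \<nu>)"
  shows "emeasure (\<rho> \<Otimes>\<^sub>M \<nu>) A = ennreal a * emeasure (\<mu> \<Otimes>\<^sub>M \<nu>) A + ennreal b * emeasure (\<mu>' \<Otimes>\<^sub>M \<nu>) A"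
proof -
  interpret R: pair_sigma_finite \<rho> \<nu> using assms(1) \<nu> by (simp add: pair_sigma_finite_def)
  interpret M: pair_sigma_finite \<mu> \<nu> using assms(2) \<nu> by (simp add: pair_sigma_finite_def)
  interpret M': pair_sigma_finite \<mu>' \<nu> using assms(3) \<nu> by (simp add: pair_sigma_finite_def)
  have AR: "A \<in> sets (\<rho> \<Otimes>\<^sub>M \<nu>)" and AM': "A \<in> sets (\<mu>' \<Otimes>\<^sub>M \<nu>)"
    using A sets_pair_measure_cong[OF s(1) refl] sets_pair_measure_cong[OF s(2) refl] by auto
  have "emeasure (\<rho> \<Otimes>\<^sub>M \<nu>) A = (\<integral>\<^sup>+y. emeasure \<rho> ((\<lambda>x. (x, y)) -` A) \<partial>\<nu>)"
    by (rule R.emeasure_pair_measure_alt2[OF AR])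
  also have "\<dots> = (\<integral>\<^sup>+y. ennreal a * emeasure \<mu> ((\<lambda>x. (x, y)) -` A)
                        + ennreal b * emeasure \<mu>' ((\<lambda>x. (x, y)) -` A) \<partial>\<nu>)"
    using sets_Pair2[OF A] r by (intro nn_integral_cong) simp
  also have "\<dots> = ennreal a * (\<integral>\<^sup>+y. emeasure \<mu> ((\<lambda>x. (x, y)) -` A) \<partial>\<nu>)
                 + ennreal b * (\<integral>\<^sup>+y. emeasure \<mu>' ((\<lambda>x. (x, y)) -` A) \<partial>\<nu>)"
    using M.measurable_emeasure_Pair2[OF A] M'.measurable_emeasure_Pair2[OF AM']
    by (simp add: nn_integral_add nn_integral_cmult)
  also have "\<dots> = ennreal a * emeasure (\<mu> \<Otimes>\<^sub>M \<nu>) A + ennreal b * emeasure (\<mu>' \<Otimes>\<^sub>M \<nu>) A"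
    by (simp add: M.emeasure_pair_measure_alt2[OF A] M'.emeasure_pair_measure_alt2[OF AM'])
  finally show ?thesis .
qed

lemma pair_measure_lincomb_right:
  assumes "sigma_finite_measure \<rho>" "sigma_finite_measure \<mu>" "sigma_finite_measure \<mu>'"
    and s: "sets \<rho> = sets \<mu>" "sets \<mu>' = sets \<mu>"
    and r: "\<forall>U\<in>sets \<mu>. emeasure \<rho> U = ennreal a * emeasure \<mu> U + ennreal b * emeasure \<mu>' U"
    and A: "A \<in> sets (\<nu> \<Otimes>\<^sub>M \<mu>)"
  shows "emeasure (\<nu> \<Otimes>\<^sub>M \<rho>) A = ennreal a * emeasure (\<nu> \<Otimes>\<^sub>M \<mu>) A + ennreal b * emeasure (\<nu> \<Otimes>\<^sub>M \<mu>') A"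
proof -
  interpret R: sigma_finite_measure \<rho> by fact
  interpret M: sigma_finite_measure \<mu> by fact
  interpret M': sigma_finite_measure \<mu>' by fact
  have AR: "A \<in> sets (\<nu> \<Otimes>\<^sub>M \<rho>)" and AM': "A \<in> sets (\<nu> \<Otimes>\<^sub>M \<mu>')"
    using A sets_pair_measure_cong[OF refl s(1)] sets_pair_measure_cong[OF refl s(2)] by auto
  have "emeasure (\<nu> \<Otimes>\<^sub>M \<rho>) A = (\<integral>\<^sup>+x. emeasure \<rho> (Pair x -` A) \<partial>\<nu>)"
    by (rule R.emeasure_pair_measure_alt[OF AR])
  also have "\<dots> = (\<integral>\<^sup>+x. ennreal a * emeasure \<mu> (Pair x -` A) + ennreal b * emeasure \<mu>' (Pair x -` A) \<partial>\<nu>)"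
    using sets_Pair1[OF A] r by (intro nn_integral_cong) simp
  also have "\<dots> = ennreal a * (\<integral>\<^sup>+x. emeasure \<mu> (Pair x -` A) \<partial>\<nu>)
                 + ennreal b * (\<integral>\<^sup>+x. emeasure \<mu>' (Pair x -` A) \<partial>\<nu>)"
    using M.measurable_emeasure_Pair[OF A] M'.measurable_emeasure_Pair[OF AM']
    by (simp add: nn_integral_add nn_integral_cmult)
  also have "\<dots> = ennreal a * emeasure (\<nu> \<Otimes>\<^sub>M \<mu>) A + ennreal b * emeasure (\<nu> \<Otimes>\<^sub>M \<mu>') A"
    by (simp add: M.emeasure_pair_measure_alt[OF A] M'.emeasure_pair_measure_alt[OF AM'])
  finally show ?thesis .
qed

lemma lincomb_sigma_finite:
  assumes mu: "is_SCurr N \<mu>" and mu': "is_SCurr N \<mu>'" and s: "sets \<rho> = sets (borel_CN N)"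
    and r: "\<forall>U\<in>sets (borel_CN N). emeasure \<rho> U = ennreal a * emeasure \<mu> U + ennreal b * emeasure \<mu>' U"
  shows "sigma_finite_measure \<rho>"
proof (rule sigma_finite_Wide[OF s])
  fix n
  have "emeasure \<rho> (Wide N n) = ennreal a * emeasure \<mu> (Wide N n) + ennreal b * emeasure \<mu>' (Wide N n)"
    using r Wide_borel by blast
  also have "\<dots> < \<infinity>"
    using SCurr_Wide_finite[OF mu] SCurr_Wide_finite[OF mu'] by (simp add: ennreal_mult_less_top)
  finally show "emeasure \<rho> (Wide N n) < \<infinity>" .
qed


lemma Ihat_bilinear:
  assumes mu: "is_SCurr N \<mu>" and mu': "is_SCurr N \<mu>'" and nu: "is_SCurr N \<nu>"
    and s: "sets \<rho> = sets (borel_CN N)"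
    and r: "\<forall>U\<in>sets (borel_CN N). emeasure \<rho> U = ennreal a * emeasure \<mu> U + ennreal b * emeasure \<mu>' U"
    and U: "U \<in> sets (borel_CN N)"
  shows "emeasure (Ihat N \<rho> \<nu>) U = ennreal a * emeasure (Ihat N \<mu> \<nu>) U + ennreal b * emeasure (Ihat N \<mu>' \<nu>) U"
    and "emeasure (Ihat N \<nu> \<rho>) U = ennreal a * emeasure (Ihat N \<nu> \<mu>) U + ennreal b * emeasure (Ihat N \<nu> \<mu>') U"
proof -
  note sf = lincomb_sigma_finite[OF mu mu' s r] SCurr_sigma_finite[OF mu] SCurr_sigma_finite[OF mu']
  note ss = s[folded SCurr_sets[OF mu]] SCurr_sets[OF mu', folded SCurr_sets[OF mu]]
  note r' = r[folded SCurr_sets[OF mu]]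
  note I = Ihat_emeasure[OF _ _ U] SCurr_sets[OF mu] SCurr_sets[OF mu'] SCurr_sets[OF nu] s
  show "emeasure (Ihat N \<rho> \<nu>) U = ennreal a * emeasure (Ihat N \<mu> \<nu>) U + ennreal b * emeasure (Ihat N \<mu>' \<nu>) U"
    using pair_measure_lincomb_left[OF sf SCurr_sigma_finite[OF nu] ss r'
        Ipre_measurable[OF SCurr_sets[OF mu] SCurr_sets[OF nu] U]] by (simp add: I)
  show "emeasure (Ihat N \<nu> \<rho>) U = ennreal a * emeasure (Ihat N \<nu> \<mu>) U + ennreal b * emeasure (Ihat N \<nu> \<mu>') U"
    using pair_measure_lincomb_right[OF sf ss r'
        Ipre_measurable[OF SCurr_sets[OF nu] SCurr_sets[OF mu] U]] by (simp add: I)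
qed


theorem mainTheorem6:
  fixes N :: nat
  assumes "2 \<le> N"
  shows
   "(\<forall>\<mu> \<nu>. is_SCurr N \<mu> \<and> is_SCurr N \<nu> \<longrightarrow>
        (\<forall>U\<in>sets (borel_CN N). Ipre N U \<in> sets (\<mu> \<Otimes>\<^sub>M \<nu>))
      \<and> is_SCurr N (Ihat N \<mu> \<nu>)
      \<and> (\<forall>U\<in>sets (borel_CN N). emeasure (Ihat N \<mu> \<nu>) U = emeasure (\<mu> \<Otimes>\<^sub>M \<nu>) (Ipre N U))
      \<and> (\<forall>T\<in>Sub1 N. emeasure (\<mu> \<Otimes>\<^sub>M \<nu>) (Ipre N (SCyl N T)) \<le> V N \<mu> * V N \<nu>))
    \<and> (\<forall>(a::real) (b::real) \<mu> \<mu>' \<nu> \<rho>.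
        0 \<le> a \<and> 0 \<le> b \<and> is_SCurr N \<mu> \<and> is_SCurr N \<mu>' \<and> is_SCurr N \<nu>
        \<and> sets \<rho> = sets (borel_CN N)
        \<and> (\<forall>U\<in>sets (borel_CN N). emeasure \<rho> U = ennreal a * emeasure \<mu> U + ennreal b * emeasure \<mu>' U)
        \<longrightarrow> (\<forall>U\<in>sets (borel_CN N).
              emeasure (Ihat N \<rho> \<nu>) U = ennreal a * emeasure (Ihat N \<mu> \<nu>) U + ennreal b * emeasure (Ihat N \<mu>' \<nu>) U
            \<and> emeasure (Ihat N \<nu> \<rho>) U = ennreal a * emeasure (Ihat N \<nu> \<mu>) U + ennreal b * emeasure (Ihat N \<nu> \<mu>') U))"
proof (intro conjI allI impI ballI)
  fix \<mu> \<nu> assume "is_SCurr N \<mu> \<and> is_SCurr N \<nu>"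
  then have mu: "is_SCurr N \<mu>" and nu: "is_SCurr N \<nu>" by auto
  show "\<And>U. U \<in> sets (borel_CN N) \<Longrightarrow> Ipre N U \<in> sets (\<mu> \<Otimes>\<^sub>M \<nu>)"
    by (rule Ipre_measurable[OF SCurr_sets[OF mu] SCurr_sets[OF nu]])
  show "is_SCurr N (Ihat N \<mu> \<nu>)" by (rule Ihat_SCurr[OF mu nu])
  show "\<And>U. U \<in> sets (borel_CN N) \<Longrightarrow> emeasure (Ihat N \<mu> \<nu>) U = emeasure (\<mu> \<Otimes>\<^sub>M \<nu>) (Ipre N U)"
    by (rule Ihat_emeasure_SCurr[OF mu nu])
  show "\<And>T. T \<in> Sub1 N \<Longrightarrow> emeasure (\<mu> \<Otimes>\<^sub>M \<nu>) (Ipre N (SCyl N T)) \<le> V N \<mu> * V N \<nu>"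
    by (rule V_bound[OF mu nu])
next
  fix a b :: real and \<mu> \<mu>' \<nu> \<rho> U
  assume "0 \<le> a \<and> 0 \<le> b \<and> is_SCurr N \<mu> \<and> is_SCurr N \<mu>' \<and> is_SCurr N \<nu>
      \<and> sets \<rho> = sets (borel_CN N)
      \<and> (\<forall>U\<in>sets (borel_CN N). emeasure \<rho> U = ennreal a * emeasure \<mu> U + ennreal b * emeasure \<mu>' U)"
    and "U \<in> sets (borel_CN N)"
  then show "emeasure (Ihat N \<rho> \<nu>) U = ennreal a * emeasure (Ihat N \<mu> \<nu>) U + ennreal b * emeasure (Ihat N \<mu>' \<nu>) U"
    and "emeasure (Ihat N \<nu> \<rho>) U = ennreal a * emeasure (Ihat N \<nu> \<mu>) U + ennreal b * emeasure (Ihat N \<nu> \<mu>') U"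
    using Ihat_bilinear[of N \<mu> \<mu>' \<nu> \<rho> a b U] by blast+
qed

end
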